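(* Let $g,h\in\mathrm{PSL}(2,\mathbb{C})$ be non-commuting loxodromic elements. If $z_0$ is the midpoint of the shortest geodesic segment connecting the axes of $g$ and $h^{-1}gh$, then $d_g z_0<d_{hgh^{-1}}z_0$.
   Context: For an isometry $\gamma$ of hyperbolic 3-space $\mathbb{H}^3$ (with hyperbolic metric $\rho$) and $z\in\mathbb{H}^3$, $d_\gamma z=\rho(z,\gamma z)$. The axis of a loxodromic element is its translation axis in $\mathbb{H}^3$. *)

theory Defs
  imports "HOL-Analysis.Analysis"
begin

text \<open>Upper half-space model of hyperbolic 3-space: a point z + t j is the pair (z, t), t > 0.\<close>

definition H3 :: "(complex \<times> real) set" where
  "H3 = {p. snd p > 0}"

definition hdist :: "complex \<times> real \<Rightarrow> complex \<times> real \<Rightarrow> real" where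
  "hdist p q = arcosh (1 + ((cmod (fst p - fst q))\<^sup>2 + (snd p - snd q)\<^sup>2) / (2 * snd p * snd q))"

text \<open>Elements of PSL(2,C) are represented by matrices in SL(2,C); everything below is
  invariant under A \<mapsto> -A.\<close>

definition SL2 :: "(complex^2^2) set" where
  "SL2 = {A. det A = 1}"

text \<open>Poincare extension: action of (a b; c d) on z + t j.\<close>
definition mob_act :: "complex^2^2 \<Rightarrow> complex \<times> real \<Rightarrow> complex \<times> real" where
  "mob_act A p =
    (let a = A$1$1; b = A$1$2; c = A$2$1; d = A$2$2; z = fst p; t = snd p;
         D = (cmod (c * z + d))\<^sup>2 + (cmod c)\<^sup>2 * t\<^sup>2
     in (((a * z + b) * cnj (c * z + d) + a * cnj c * complex_of_real (t\<^sup>2)) / complex_of_real D,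
         t / D))"

definition disp :: "complex^2^2 \<Rightarrow> complex \<times> real \<Rightarrow> real" where
  "disp A p = hdist p (mob_act A p)"

definition loxodromic :: "complex^2^2 \<Rightarrow> bool" where
  "loxodromic A \<longleftrightarrow> A \<in> SL2 \<and> trace A \<notin> complex_of_real ` {-2..2}"

text \<open>Commuting as elements of PSL(2,C).\<close>
definition psl_commute :: "complex^2^2 \<Rightarrow> complex^2^2 \<Rightarrow> bool" where
  "psl_commute A B \<longleftrightarrow> A ** B = B ** A \<or> A ** B = - (B ** A)"

definition geodesic_line :: "(complex \<times> real) set \<Rightarrow> bool" where
  "geodesic_line L \<longleftrightarrow> (\<exists>\<gamma>. (\<forall>s. \<gamma> s \<in> H3) \<and> (\<forall>s t. hdist (\<gamma> s) (\<gamma> t) = \<bar>s - t\<bar>) \<and> L = range \<gamma>)"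

definition axis :: "complex^2^2 \<Rightarrow> (complex \<times> real) set" where
  "axis A = (THE L. geodesic_line L \<and> mob_act A ` L = L)"

definition hmidpoint :: "complex \<times> real \<Rightarrow> complex \<times> real \<Rightarrow> complex \<times> real \<Rightarrow> bool" where
  "hmidpoint p q m \<longleftrightarrow> m \<in> H3 \<and> hdist p m = hdist p q / 2 \<and> hdist m q = hdist p q / 2"

end

theory Submission
  imports Defs
begin

text \<open>Conjugating, we may take \<open>g = diag(a, 1/a)\<close>, whose axis is the vertical line \<open>V\<close>
  and whose displacement \<open>d\<^sub>g z\<close> is an increasing function of \<open>\<rho>(z, V)\<close>. Since
  \<open>d\<^bsub>hgh\<^sup>-\<^sup>1\<^esub> z = d\<^sub>g (h\<^sup>-\<^sup>1 z)\<close> and \<open>\<rho>(h\<^sup>-\<^sup>1 z, V) = \<rho>(z, hV)\<close>, it suffices that \<open>z\<^sub>0\<close> is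
  closer to \<open>V\<close> than to \<open>hV\<close>. Now \<open>\<rho>(z\<^sub>0, V) \<le> \<rho>(p, q)/2\<close>, and \<open>\<rho>(p, q)\<close> is also the distance
  from \<open>V\<close> to \<open>hV\<close>. If some point \<open>c\<close> of \<open>hV\<close> were within \<open>\<rho>(p, q)/2\<close> of \<open>z\<^sub>0\<close>, the
  triangle inequality would be an equality and force \<open>c = q\<close>. Then both \<open>(p, q)\<close> and
  \<open>(hq, hp)\<close> would be shortest segments between \<open>V\<close> and \<open>hV\<close>; as the common perpendicular of
  two distinct geodesics is unique, \<open>h\<^sup>2\<close> would fix \<open>p\<close>, which is impossible for a loxodromic
  element.\<close>

section \<open>Matrices and the Poincare extension\<close>

definition mat2 :: "complex \<Rightarrow> complex \<Rightarrow> complex \<Rightarrow> complex \<Rightarrow> complex^2^2" where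
  "mat2 a b c d = vector [vector [a, b], vector [c, d]]"

lemma mat2_nth [simp]:
  "mat2 a b c d $1$1 = a" "mat2 a b c d $1$2 = b" "mat2 a b c d $2$1 = c" "mat2 a b c d $2$2 = d"
  by (simp_all add: mat2_def vector_2)

lemma mat2_cases: obtains a b c d where "A = mat2 a b c d"
proof
  show "A = mat2 (A$1$1) (A$1$2) (A$2$1) (A$2$2)"
    by (simp add: vec_eq_iff forall_2)
qed

lemma mat2_eq_iff [simp]:
  "mat2 a b c d = mat2 a' b' c' d' \<longleftrightarrow> a = a' \<and> b = b' \<and> c = c' \<and> d = d'"
  by (auto simp: vec_eq_iff forall_2)

lemma mat2_mult [simp]:
  "mat2 a b c d ** mat2 a' b' c' d' = mat2 (a*a' + b*c') (a*b' + b*d') (c*a' + d*c') (c*b' + d*d')"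
  by (simp add: vec_eq_iff forall_2 matrix_matrix_mult_def sum_2)

lemma det_mat2 [simp]: "det (mat2 a b c d) = a*d - b*c"
  by (simp add: det_2)

lemma trace_mat2 [simp]: "trace (mat2 a b c d) = a + d"
  by (simp add: trace_def sum_2)

lemma mat_1_eq_mat2: "mat 1 = mat2 1 0 0 1"
  by (simp add: vec_eq_iff forall_2 mat_def)

lemma matrix_mul_uminus_right: "(A :: 'a::ring_1^'n^'m) ** (- B) = - (A ** B)"
  by (simp add: vec_eq_iff matrix_matrix_mult_def sum_negf)

lemma matrix_mul_uminus_left: "(- A :: 'a::ring_1^'n^'m) ** B = - (A ** B)"
  by (simp add: vec_eq_iff matrix_matrix_mult_def sum_negf)

lemma matrix_inv_unique:
  fixes A B :: "'a::comm_ring_1^'n^'n"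
  assumes "A ** B = mat 1" "B ** A = mat 1"
  shows "matrix_inv A = B"
proof -
  define C where "C = matrix_inv A"
  have C: "A ** C = mat 1 \<and> C ** A = mat 1"
    using someI_ex[of "\<lambda>C. A ** C = mat 1 \<and> C ** A = mat 1"] assms
    unfolding C_def matrix_inv_def by blast
  have "C = C ** (A ** B)"
    using assms by simp
  also have "\<dots> = (C ** A) ** B"
    by (simp add: matrix_mul_assoc)
  also have "\<dots> = B"
    using C by simp
  finally show ?thesis
    by (simp add: C_def)
qed

lemma matrix_inv_mat2:
  assumes "a*d - b*c = 1"
  shows "matrix_inv (mat2 a b c d) = mat2 d (-b) (-c) a"
  using assms by (intro matrix_inv_unique) (simp_all add: mat_1_eq_mat2 algebra_simps)

lemma matrix_inv_det1:
  fixes A :: "complex^2^2"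
  assumes "det A = 1"
  shows "A ** matrix_inv A = mat 1" "matrix_inv A ** A = mat 1" "det (matrix_inv A) = 1"
    "matrix_inv (matrix_inv A) = A"
proof -
  obtain a b c d where A: "A = mat2 a b c d" by (rule mat2_cases)
  have det: "a*d - b*c = 1" "d*a - (-b)*(-c) = 1"
    using assms by (simp_all add: A algebra_simps)
  show "A ** matrix_inv A = mat 1" "matrix_inv A ** A = mat 1" "det (matrix_inv A) = 1"
    using det by (simp_all add: A matrix_inv_mat2 mat_1_eq_mat2 algebra_simps)
  show "matrix_inv (matrix_inv A) = A"
    using det by (simp add: A matrix_inv_mat2)
qed

lemma mob_act_mat2:
  "mob_act (mat2 a b c d) (z, t) =
    (((a*z + b) * cnj (c*z + d) + a * cnj c * complex_of_real (t\<^sup>2)) /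
       complex_of_real ((cmod (c*z + d))\<^sup>2 + (cmod c)\<^sup>2 * t\<^sup>2),
     t / ((cmod (c*z + d))\<^sup>2 + (cmod c)\<^sup>2 * t\<^sup>2))"
  by (simp add: mob_act_def Let_def)

lemma mob_denom_pos:
  assumes "a*d - b*c = 1" "t > 0"
  shows "(cmod (c*z + d))\<^sup>2 + (cmod c)\<^sup>2 * t\<^sup>2 > 0"
proof (cases "c = 0")
  case True
  then show ?thesis using assms by auto
next
  case False
  then have "(cmod c)\<^sup>2 * t\<^sup>2 > 0" using assms by simp
  then show ?thesis by (simp add: add_nonneg_pos)
qed

lemma mob_act_H3:
  assumes "det A = 1" "p \<in> H3"
  shows "mob_act A p \<in> H3"
proof -
  obtain a b c d where "A = mat2 a b c d" by (rule mat2_cases)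
  moreover obtain z t where "p = (z, t)" by fastforce
  ultimately show ?thesis
    using assms mob_denom_pos[of a d b c t z] by (simp add: mob_act_mat2 H3_def)
qed

lemma mob_act_image_H3: "det A = 1 \<Longrightarrow> S \<subseteq> H3 \<Longrightarrow> mob_act A ` S \<subseteq> H3"
  using mob_act_H3 by blast

lemma cnj_det_eq_1: "a*d - b*c = (1::complex) \<Longrightarrow> cnj a * cnj d - cnj b * cnj c = 1"
  by (metis complex_cnj_diff complex_cnj_mult complex_cnj_one)

lemma complex_of_real_cmod_square: "complex_of_real ((cmod x)\<^sup>2) = x * cnj x"
  by (rule complex_norm_square)

definition mob_denom :: "complex^2^2 \<Rightarrow> complex \<Rightarrow> real \<Rightarrow> real" where
  "mob_denom A z t = (cmod (A$2$1 * z + A$2$2))\<^sup>2 + (cmod (A$2$1))\<^sup>2 * t\<^sup>2"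

definition mob_numer :: "complex^2^2 \<Rightarrow> complex \<Rightarrow> real \<Rightarrow> complex" where
  "mob_numer A z t = (A$1$1 * z + A$1$2) * cnj (A$2$1 * z + A$2$2) + A$1$1 * cnj (A$2$1) * complex_of_real (t\<^sup>2)"

lemma mob_act_eq: "mob_act A (z, t) = (mob_numer A z t / complex_of_real (mob_denom A z t), t / mob_denom A z t)"
  by (simp add: mob_act_def mob_numer_def mob_denom_def Let_def)

lemma mob_denom_mat2_pos: "a*d - b*c = 1 \<Longrightarrow> t > 0 \<Longrightarrow> mob_denom (mat2 a b c d) z t > 0"
  using mob_denom_pos by (simp add: mob_denom_def)

lemma complex_of_real_mob_denom_mat2:
  "complex_of_real (mob_denom (mat2 a b c d) z t) =
    (c*z + d) * (cnj c * cnj z + cnj d) + c * cnj c * (of_real t * of_real t)"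
  unfolding mob_denom_def mat2_nth of_real_add of_real_mult complex_of_real_cmod_square
  by (simp add: power2_eq_square)

lemma mob_numer_mat2:
  "mob_numer (mat2 a b c d) z t = (a*z + b) * (cnj c * cnj z + cnj d) + a * cnj c * (of_real t * of_real t)"
  by (simp add: mob_numer_def power2_eq_square)

lemma cnj_mob_numer_mat2:
  "cnj (mob_numer (mat2 a b c d) z t) = (cnj a * cnj z + cnj b) * (c*z + d) + cnj a * c * (of_real t * of_real t)"
  by (simp add: mob_numer_def power2_eq_square)

text \<open>Clearing denominators in the composition law and in the isometry property of the
  Poincare extension leaves these polynomial identities; capital letters stand for complex
  conjugates.\<close>

lemma mob_mult_denom_identity:
  fixes a b c d a' b' c' d' z A B C D A' B' C' D' Z T :: complex
  assumes "a*d-b*c=1" "A*D-B*C=1" "a'*d'-b'*c'=1" "A'*D'-B'*C'=1"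
  shows "(c*((a'*z+b')*(C'*Z+D') + a'*C'*T)+d*((c'*z+d')*(C'*Z+D') + c'*C'*T))*(C*((A'*Z+B')*(c'*z+d') + A'*c'*T)+D*((c'*z+d')*(C'*Z+D') + c'*C'*T)) + c*C*T = (((c*a'+d*c')*z + (c*b'+d*d'))*((C*A'+D*C')*Z + (C*B'+D*D')) + (c*a'+d*c')*(C*A'+D*C')*T) * ((c'*z+d')*(C'*Z+D') + c'*C'*T)"
  using assms by algebra

lemma mob_mult_numer_identity:
  fixes a b c d a' b' c' d' z A B C D A' B' C' D' Z T :: complex
  assumes "a*d-b*c=1" "A*D-B*C=1" "a'*d'-b'*c'=1" "A'*D'-B'*C'=1"
  shows "(a*((a'*z+b')*(C'*Z+D') + a'*C'*T)+b*((c'*z+d')*(C'*Z+D') + c'*C'*T))*(C*((A'*Z+B')*(c'*z+d') + A'*c'*T)+D*((c'*z+d')*(C'*Z+D') + c'*C'*T)) + a*C*T = (((a*a'+b*c')*z + (a*b'+b*d'))*((C*A'+D*C')*Z + (C*B'+D*D')) + (a*a'+b*c')*(C*A'+D*C')*T) * ((c'*z+d')*(C'*Z+D') + c'*C'*T)"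
  using assms by algebra

lemma mob_isometry_identity:
  fixes a b c d z A B C D Z y Y t s :: complex
  assumes "a*d-b*c=1" "A*D-B*C=1"
  shows "(((a*z+b)*(C*Z+D) + a*C*(t*t))*((c*y+d)*(C*Y+D) + c*C*(s * s)) - ((a*y+b)*(C*Y+D) + a*C*(s * s))*((c*z+d)*(C*Z+D) + c*C*(t*t)))
        *(((A*Z+B)*(c*z+d) + A*c*(t*t))*((c*y+d)*(C*Y+D) + c*C*(s * s)) - ((A*Y+B)*(c*y+d) + A*c*(s * s))*((c*z+d)*(C*Z+D) + c*C*(t*t)))
       + (t*((c*y+d)*(C*Y+D) + c*C*(s * s)) - s*((c*z+d)*(C*Z+D) + c*C*(t*t)))^2
     = ((c*z+d)*(C*Z+D) + c*C*(t*t))*((c*y+d)*(C*Y+D) + c*C*(s * s))*((z-y)*(Z-Y) + (t-s)^2)"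
  using assms by algebra

lemma mob_denom_mult_mat2:
  fixes z :: complex and t :: real
  assumes det1: "a*d - b*c = 1" and det2: "a'*d' - b'*c' = 1" and t: "t > 0"
  defines "D1 \<equiv> mob_denom (mat2 a' b' c' d') z t" and "N1 \<equiv> mob_numer (mat2 a' b' c' d') z t"
  shows "mob_denom (mat2 a b c d ** mat2 a' b' c' d') z t = mob_denom (mat2 a b c d) (N1 / D1) (t / D1) * D1"
proof -
  have "D1 > 0" unfolding D1_def using mob_denom_mat2_pos[OF det2 t] .
  have "complex_of_real (mob_denom (mat2 a b c d) (N1 / D1) (t / D1)) * complex_of_real D1 ^ 2
      = (c*N1 + d*D1) * (cnj c * cnj N1 + cnj d * D1) + c * cnj c * (of_real t * of_real t)"
    unfolding complex_of_real_mob_denom_mat2 using \<open>D1 > 0\<close> by (simp add: field_simps power2_eq_square)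
  also have "\<dots> = complex_of_real (mob_denom (mat2 a b c d ** mat2 a' b' c' d') z t) * complex_of_real D1"
    unfolding D1_def N1_def cnj_mob_numer_mat2
    unfolding mat2_mult complex_of_real_mob_denom_mat2 mob_numer_mat2 complex_cnj_add complex_cnj_mult
    by (rule mob_mult_denom_identity[OF det1 cnj_det_eq_1[OF det1] det2 cnj_det_eq_1[OF det2]])
  finally show ?thesis
    using \<open>D1 > 0\<close> by (simp add: power2_eq_square flip: of_real_mult)
qed

lemma mob_numer_mult_mat2:
  fixes z :: complex and t :: real
  assumes det1: "a*d - b*c = 1" and det2: "a'*d' - b'*c' = 1" and t: "t > 0"
  defines "D1 \<equiv> mob_denom (mat2 a' b' c' d') z t" and "N1 \<equiv> mob_numer (mat2 a' b' c' d') z t"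
  shows "mob_numer (mat2 a b c d ** mat2 a' b' c' d') z t = mob_numer (mat2 a b c d) (N1 / D1) (t / D1) * D1"
proof -
  have "D1 > 0" unfolding D1_def using mob_denom_mat2_pos[OF det2 t] .
  have "mob_numer (mat2 a b c d) (N1 / D1) (t / D1) * complex_of_real D1 ^ 2
      = (a*N1 + b*D1) * (cnj c * cnj N1 + cnj d * D1) + a * cnj c * (of_real t * of_real t)"
    unfolding mob_numer_mat2 using \<open>D1 > 0\<close> by (simp add: field_simps power2_eq_square)
  also have "\<dots> = mob_numer (mat2 a b c d ** mat2 a' b' c' d') z t * complex_of_real D1"
    unfolding D1_def N1_def cnj_mob_numer_mat2
    unfolding mat2_mult complex_of_real_mob_denom_mat2 mob_numer_mat2 complex_cnj_add complex_cnj_mult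
    by (rule mob_mult_numer_identity[OF det1 cnj_det_eq_1[OF det1] det2 cnj_det_eq_1[OF det2]])
  finally show ?thesis
    using \<open>D1 > 0\<close> by (simp add: power2_eq_square)
qed

lemma mob_act_mult_mat2:
  assumes det1: "a*d - b*c = 1" and det2: "a'*d' - b'*c' = 1" and t: "t > 0"
  shows "mob_act (mat2 a b c d ** mat2 a' b' c' d') (z, t) =
    mob_act (mat2 a b c d) (mob_act (mat2 a' b' c' d') (z, t))"
proof -
  define D1 N1 where "D1 = mob_denom (mat2 a' b' c' d') z t" and "N1 = mob_numer (mat2 a' b' c' d') z t"
  have "D1 > 0" unfolding D1_def using mob_denom_mat2_pos[OF det2 t] .
  moreover have "mob_denom (mat2 a b c d) (N1 / D1) (t / D1) > 0"
    using mob_denom_mat2_pos[OF det1, of "t / D1"] \<open>D1 > 0\<close> t by simp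
  ultimately show ?thesis
    using mob_denom_mult_mat2[OF assms, of z] mob_numer_mult_mat2[OF assms, of z]
    unfolding mob_act_eq[of _ z t] D1_def[symmetric] N1_def[symmetric]
    by (simp add: mob_act_eq field_simps)
qed

lemma mob_act_mult:
  assumes "det A = 1" "det B = 1" "p \<in> H3"
  shows "mob_act (A ** B) p = mob_act A (mob_act B p)"
proof -
  obtain a b c d where "A = mat2 a b c d" by (rule mat2_cases)
  moreover obtain a' b' c' d' where "B = mat2 a' b' c' d'" by (rule mat2_cases)
  moreover obtain z t where "p = (z, t)" by fastforce
  ultimately show ?thesis
    using assms mob_act_mult_mat2[of a d b c a' d' b' c' t z] by (simp add: H3_def)
qed

lemma mob_act_mult_image:
  assumes "det A = 1" "det B = 1" "S \<subseteq> H3"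
  shows "mob_act (A ** B) ` S = mob_act A ` mob_act B ` S"
  using assms mob_act_mult by (force simp: image_image)

lemma mob_act_mat_1 [simp]: "mob_act (mat 1) p = p"
  by (cases p) (simp add: mat_1_eq_mat2 mob_act_mat2)

lemma mob_act_matrix_inv:
  assumes "det A = 1" "p \<in> H3"
  shows "mob_act (matrix_inv A) (mob_act A p) = p" "mob_act A (mob_act (matrix_inv A) p) = p"
  using mob_act_mult[of "matrix_inv A" A p] mob_act_mult[of A "matrix_inv A" p]
    matrix_inv_det1[OF assms(1)] assms by auto

lemma mob_act_matrix_inv_image:
  assumes "det A = 1" "S \<subseteq> H3"
  shows "mob_act (matrix_inv A) ` mob_act A ` S = S" "mob_act A ` mob_act (matrix_inv A) ` S = S"
  using mob_act_matrix_inv[OF assms(1)] assms(2) by (force simp: image_image)+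

section \<open>Hyperbolic distance\<close>

definition hcosh :: "complex \<times> real \<Rightarrow> complex \<times> real \<Rightarrow> real" where
  "hcosh p q = 1 + ((cmod (fst p - fst q))\<^sup>2 + (snd p - snd q)\<^sup>2) / (2 * snd p * snd q)"

lemma hdist_eq_arcosh_hcosh: "hdist p q = arcosh (hcosh p q)"
  by (simp add: hdist_def hcosh_def)

lemma hcosh_mob_act_mat2:
  assumes det: "a*d - b*c = 1" and t: "t > 0" and s: "s > 0"
  shows "hcosh (mob_act (mat2 a b c d) (z, t)) (mob_act (mat2 a b c d) (y, s)) = hcosh (z, t) (y, s)"
proof -
  define Dz Nz Dy Ny where "Dz = mob_denom (mat2 a b c d) z t" and "Nz = mob_numer (mat2 a b c d) z t"
    and "Dy = mob_denom (mat2 a b c d) y s" and "Ny = mob_numer (mat2 a b c d) y s"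
  have Dz: "Dz > 0" and Dy: "Dy > 0"
    unfolding Dz_def Dy_def using mob_denom_mat2_pos[OF det] t s by auto
  have "complex_of_real ((cmod (Nz*Dy - Ny*Dz))\<^sup>2 + (t*Dy - s*Dz)\<^sup>2) =
      complex_of_real (Dz * Dy * ((cmod (z - y))\<^sup>2 + (t - s)\<^sup>2))"
    unfolding of_real_add of_real_mult complex_of_real_cmod_square
    unfolding of_real_power of_real_diff of_real_mult
    apply (simp only: complex_cnj_diff complex_cnj_mult complex_cnj_complex_of_real)
    unfolding Dz_def Dy_def Nz_def Ny_def cnj_mob_numer_mat2
    unfolding complex_of_real_mob_denom_mat2 mob_numer_mat2
    by (rule mob_isometry_identity[OF det cnj_det_eq_1[OF det]])
  then have key: "(cmod (Nz*Dy - Ny*Dz))\<^sup>2 + (t*Dy - s*Dz)\<^sup>2 = Dz * Dy * ((cmod (z - y))\<^sup>2 + (t - s)\<^sup>2)"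
    using of_real_eq_iff by blast
  have "Nz / Dz - Ny / Dy = (Nz*Dy - Ny*Dz) / complex_of_real (Dz * Dy)"
    using Dz Dy by (simp add: field_simps)
  then have horizontal: "cmod (Nz / Dz - Ny / Dy) = cmod (Nz*Dy - Ny*Dz) / (Dz * Dy)"
    using Dz Dy by (simp add: norm_divide norm_mult)
  have vertical: "t / Dz - s / Dy = (t*Dy - s*Dz) / (Dz * Dy)"
    using Dz Dy by (simp add: field_simps)
  show ?thesis
    unfolding mob_act_eq Dz_def[symmetric] Nz_def[symmetric] Dy_def[symmetric] Ny_def[symmetric]
      hcosh_def fst_conv snd_conv horizontal vertical
    using Dz Dy t s key by (simp add: field_simps power2_eq_square)
qed

lemma hdist_mob_act:
  assumes "det A = 1" "p \<in> H3" "q \<in> H3"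
  shows "hdist (mob_act A p) (mob_act A q) = hdist p q"
proof -
  obtain a b c d where "A = mat2 a b c d" by (rule mat2_cases)
  moreover obtain z t where "p = (z, t)" by fastforce
  moreover obtain y s where "q = (y, s)" by fastforce
  ultimately show ?thesis
    using assms hcosh_mob_act_mat2[of a d b c t s z y]
    by (simp add: H3_def hdist_eq_arcosh_hcosh)
qed

lemma hcosh_ge_1: "p \<in> H3 \<Longrightarrow> q \<in> H3 \<Longrightarrow> hcosh p q \<ge> 1"
  unfolding hcosh_def H3_def by simp

lemma cosh_hdist: "p \<in> H3 \<Longrightarrow> q \<in> H3 \<Longrightarrow> cosh (hdist p q) = hcosh p q"
  unfolding hdist_eq_arcosh_hcosh using hcosh_ge_1 by simp

lemma hdist_nonneg: "p \<in> H3 \<Longrightarrow> q \<in> H3 \<Longrightarrow> hdist p q \<ge> 0"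
  unfolding hdist_eq_arcosh_hcosh using hcosh_ge_1 by simp

lemma hcosh_commute: "hcosh p q = hcosh q p"
  unfolding hcosh_def by (simp add: norm_minus_commute power2_commute mult.commute)

lemma hdist_commute: "hdist p q = hdist q p"
  unfolding hdist_eq_arcosh_hcosh by (simp add: hcosh_commute)

lemma hdist_self [simp]: "hdist p p = 0"
  by (simp add: hdist_eq_arcosh_hcosh hcosh_def)

lemma hdist_eq_0_iff:
  assumes "p \<in> H3" "q \<in> H3"
  shows "hdist p q = 0 \<longleftrightarrow> p = q"
proof
  assume "hdist p q = 0"
  then have "hcosh p q = 1"
    using hcosh_ge_1[OF assms] by (simp add: hdist_eq_arcosh_hcosh)
  then show "p = q"
    using assms by (cases p, cases q) (auto simp: hcosh_def H3_def add_nonneg_eq_0_iff)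
qed simp

lemma hdist_le_iff_hcosh:
  "p \<in> H3 \<Longrightarrow> q \<in> H3 \<Longrightarrow> p' \<in> H3 \<Longrightarrow> q' \<in> H3 \<Longrightarrow>
    hdist p q \<le> hdist p' q' \<longleftrightarrow> hcosh p q \<le> hcosh p' q'"
  unfolding hdist_eq_arcosh_hcosh using hcosh_ge_1 by (meson arcosh_less_iff_real not_le)

lemma hdist_less_iff_hcosh:
  "p \<in> H3 \<Longrightarrow> q \<in> H3 \<Longrightarrow> p' \<in> H3 \<Longrightarrow> q' \<in> H3 \<Longrightarrow>
    hdist p q < hdist p' q' \<longleftrightarrow> hcosh p q < hcosh p' q'"
  unfolding hdist_eq_arcosh_hcosh using hcosh_ge_1 by simp

text \<open>Coordinates of the hyperboloid model \<open>x\<^sub>0\<^sup>2 - |x|\<^sup>2 = 1\<close>, in which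
  \<open>cosh \<rho>\<close> is the Minkowski product.\<close>

definition hyp_time :: "complex \<times> real \<Rightarrow> real" where
  "hyp_time p = ((cmod (fst p))\<^sup>2 + (snd p)\<^sup>2 + 1) / (2 * snd p)"

definition hyp_space :: "complex \<times> real \<Rightarrow> complex \<times> real" where
  "hyp_space p = (fst p / complex_of_real (snd p), ((cmod (fst p))\<^sup>2 + (snd p)\<^sup>2 - 1) / (2 * snd p))"

lemma hcosh_hyperboloid:
  assumes "p \<in> H3" "q \<in> H3"
  shows "hcosh p q = hyp_time p * hyp_time q - hyp_space p \<bullet> hyp_space q"
proof -
  obtain z t where p: "p = (z, t)" by fastforce
  obtain y s where q: "q = (y, s)" by fastforce
  have "t > 0" "s > 0" using assms p q by (auto simp: H3_def)
  moreover have "Re (z / complex_of_real t) = Re z / t" "Im (z / complex_of_real t) = Im z / t"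
    "Re (y / complex_of_real s) = Re y / s" "Im (y / complex_of_real s) = Im y / s"
    by (simp_all add: Re_divide_of_real Im_divide_of_real)
  moreover have cmod_sq: "(cmod (z - y))\<^sup>2 = (Re z - Re y)\<^sup>2 + (Im z - Im y)\<^sup>2"
    "(cmod z)\<^sup>2 = (Re z)\<^sup>2 + (Im z)\<^sup>2" "(cmod y)\<^sup>2 = (Re y)\<^sup>2 + (Im y)\<^sup>2"
    by (simp_all add: cmod_power2)
  ultimately show ?thesis
    unfolding p q hcosh_def hyp_time_def hyp_space_def fst_conv snd_conv
      inner_Pair inner_complex_def inner_real_def cmod_sq
    by (simp add: field_simps power2_eq_square)
qed

definition pt_j :: "complex \<times> real" where
  "pt_j = (0, 1)"

lemma pt_j_H3 [simp]: "pt_j \<in> H3"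
  by (simp add: pt_j_def H3_def)

lemma hcosh_pt_j: "p \<in> H3 \<Longrightarrow> hcosh pt_j p = hyp_time p"
  unfolding hcosh_def hyp_time_def pt_j_def H3_def by (cases p) (simp add: field_simps power2_eq_square)

lemma hyp_time_eq_cosh: "p \<in> H3 \<Longrightarrow> hyp_time p = cosh (hdist pt_j p)"
  using cosh_hdist[OF pt_j_H3] hcosh_pt_j by simp

lemma norm_hyp_space_eq_sinh:
  assumes "p \<in> H3"
  shows "norm (hyp_space p) = sinh (hdist pt_j p)"
proof -
  have "hcosh p p = 1" by (simp add: hcosh_def)
  then have "hyp_space p \<bullet> hyp_space p = (hyp_time p)\<^sup>2 - 1"
    using hcosh_hyperboloid[OF assms assms] by (simp add: power2_eq_square)
  then have "(norm (hyp_space p))\<^sup>2 = (hyp_time p)\<^sup>2 - 1"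
    by (simp add: power2_norm_eq_inner)
  also have "\<dots> = (sinh (hdist pt_j p))\<^sup>2"
    using hyp_time_eq_cosh[OF assms] by (simp add: sinh_square_eq)
  finally show ?thesis
    using hdist_nonneg[OF pt_j_H3 assms] by (simp add: power2_eq_iff_nonneg)
qed

lemma hyperboloid_coords_inj:
  assumes "p \<in> H3" "q \<in> H3" "hyp_time p = hyp_time q" "hyp_space p = hyp_space q"
  shows "p = q"
proof -
  obtain z t where p: "p = (z, t)" by fastforce
  obtain y s where q: "q = (y, s)" by fastforce
  have t: "t > 0" and s: "s > 0" using assms p q by (auto simp: H3_def)
  have "hyp_time p - snd (hyp_space p) = 1 / t" "hyp_time q - snd (hyp_space q) = 1 / s"
    unfolding p q hyp_time_def hyp_space_def using t s by (simp_all add: field_simps)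
  then have ts: "t = s" using assms by simp
  have "fst (hyp_space p) = z / t" "fst (hyp_space q) = y / s"
    unfolding p q hyp_space_def by simp_all
  then have "z = y" using assms ts t by (simp add: field_simps)
  then show ?thesis using p q ts by simp
qed

definition shift_to_j :: "complex \<times> real \<Rightarrow> complex \<times> real \<Rightarrow> complex \<times> real" where
  "shift_to_j y p = ((fst p - fst y) / complex_of_real (snd y), snd p / snd y)"

lemma shift_to_j_H3: "y \<in> H3 \<Longrightarrow> p \<in> H3 \<Longrightarrow> shift_to_j y p \<in> H3"
  unfolding shift_to_j_def H3_def by simp

lemma shift_to_j_self: "y \<in> H3 \<Longrightarrow> shift_to_j y y = pt_j"
  unfolding shift_to_j_def H3_def pt_j_def by simp

lemma shift_to_j_inj: "y \<in> H3 \<Longrightarrow> shift_to_j y p = shift_to_j y q \<Longrightarrow> p = q"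
  unfolding shift_to_j_def H3_def by (cases p, cases q) (auto simp: field_simps)

lemma hdist_shift_to_j:
  assumes "y \<in> H3"
  shows "hdist (shift_to_j y p) (shift_to_j y q) = hdist p q"
proof -
  have ty: "snd y > 0" using assms by (simp add: H3_def)
  have "(fst p - fst y) / complex_of_real (snd y) - (fst q - fst y) / complex_of_real (snd y)
      = (fst p - fst q) / complex_of_real (snd y)"
    by (simp add: diff_divide_distrib)
  then have horizontal: "cmod ((fst p - fst y) / complex_of_real (snd y) - (fst q - fst y) / complex_of_real (snd y))
      = cmod (fst p - fst q) / snd y"
    using ty by (simp add: norm_divide)
  define y2 where "y2 = (snd y)\<^sup>2"
  have "y2 > 0" using ty by (simp add: y2_def)
  have numerator: "(cmod (fst p - fst q) / snd y)\<^sup>2 + (snd p / snd y - snd q / snd y)\<^sup>2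
      = ((cmod (fst p - fst q))\<^sup>2 + (snd p - snd q)\<^sup>2) / y2"
    unfolding y2_def using ty by (simp add: field_simps power2_eq_square)
  have denominator: "2 * (snd p / snd y) * (snd q / snd y) = (2 * snd p * snd q) / y2"
    unfolding y2_def using ty by (simp add: field_simps power2_eq_square)
  have "hcosh (shift_to_j y p) (shift_to_j y q) = hcosh p q"
    unfolding hcosh_def shift_to_j_def fst_conv snd_conv horizontal numerator denominator
    using \<open>y2 > 0\<close> by simp
  then show ?thesis by (simp add: hdist_eq_arcosh_hcosh)
qed

lemma hdist_triangle_pt_j:
  assumes "x \<in> H3" "z \<in> H3"
  shows "hdist x z \<le> hdist x pt_j + hdist pt_j z"
proof -
  define u v where "u = hdist pt_j x" and "v = hdist pt_j z"
  have "- (hyp_space x \<bullet> hyp_space z) \<le> norm (hyp_space x) * norm (hyp_space z)"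
    using norm_cauchy_schwarz[of "- hyp_space x" "hyp_space z"] by simp
  then have "hcosh x z \<le> cosh u * cosh v + sinh u * sinh v"
    using hcosh_hyperboloid[OF assms] hyp_time_eq_cosh norm_hyp_space_eq_sinh assms
    by (simp add: u_def v_def)
  also have "\<dots> = cosh (u + v)"
    by (simp add: cosh_add)
  finally have "cosh (hdist x z) \<le> cosh (u + v)"
    using cosh_hdist[OF assms] by simp
  moreover have "u \<ge> 0" "v \<ge> 0" "hdist x z \<ge> 0"
    using hdist_nonneg assms by (simp_all add: u_def v_def)
  ultimately show ?thesis
    by (simp add: cosh_real_nonneg_le_iff u_def v_def hdist_commute[of x pt_j])
qed

lemma hdist_triangle:
  assumes "x \<in> H3" "y \<in> H3" "z \<in> H3"
  shows "hdist x z \<le> hdist x y + hdist y z"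
  using hdist_triangle_pt_j[OF shift_to_j_H3[OF assms(2,1)] shift_to_j_H3[OF assms(2,3)]]
  unfolding hdist_shift_to_j[OF assms(2)] shift_to_j_self[OF assms(2), symmetric]
  by (simp only: hdist_shift_to_j[OF assms(2)])

text \<open>In the equality case of the triangle inequality the hyperboloid vector of \<open>z\<close> is a
  negative multiple of that of \<open>y\<close> (equality in Cauchy-Schwarz), so \<open>z\<close> is determined by
  its distance from \<open>j\<close>.\<close>

lemma hdist_extension_unique_pt_j:
  assumes y: "y \<in> H3" and z: "z \<in> H3" and z': "z' \<in> H3" and "y \<noteq> pt_j"
    and dist_j: "hdist pt_j z = hdist pt_j z'" and dist_y: "hdist y z = hdist y z'"
    and between: "hdist y z = hdist pt_j y + hdist pt_j z"
  shows "z = z'"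
proof -
  define a b where "a = hdist pt_j z" and "b = hdist pt_j y"
  have "b > 0"
    using hdist_nonneg[OF pt_j_H3 y] hdist_eq_0_iff[OF pt_j_H3 y] \<open>y \<noteq> pt_j\<close>
    unfolding b_def by force
  have space: "hyp_space w = - (sinh a / sinh b) *\<^sub>R hyp_space y"
    if w: "w \<in> H3" and "hdist pt_j w = a" and "hdist y w = b + a" for w
  proof -
    have "cosh (b + a) = hyp_time y * hyp_time w - hyp_space y \<bullet> hyp_space w"
      using cosh_hdist[OF y w] hcosh_hyperboloid[OF y w] that by simp
    then have "(- hyp_space y) \<bullet> hyp_space w = norm (- hyp_space y) * norm (hyp_space w)"
      using hyp_time_eq_cosh[OF y] hyp_time_eq_cosh[OF w] norm_hyp_space_eq_sinh[OF y]
        norm_hyp_space_eq_sinh[OF w] that b_def by (simp add: cosh_add)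
    then have "norm (- hyp_space y) *\<^sub>R hyp_space w = norm (hyp_space w) *\<^sub>R (- hyp_space y)"
      using norm_cauchy_schwarz_eq by blast
    then have scaled: "sinh b *\<^sub>R hyp_space w = - (sinh a *\<^sub>R hyp_space y)"
      using norm_hyp_space_eq_sinh[OF y] norm_hyp_space_eq_sinh[OF w] that b_def by simp
    have "hyp_space w = (1 / sinh b) *\<^sub>R (sinh b *\<^sub>R hyp_space w)"
      using \<open>b > 0\<close> by simp
    also have "\<dots> = - (sinh a / sinh b) *\<^sub>R hyp_space y"
      unfolding scaled by simp
    finally show ?thesis .
  qed
  have "hyp_space z = hyp_space z'"
    using space[OF z] space[OF z'] dist_j dist_y between by (simp add: a_def b_def add.commute)
  moreover have "hyp_time z = hyp_time z'"
    using hyp_time_eq_cosh z z' dist_j by simp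
  ultimately show ?thesis
    using hyperboloid_coords_inj z z' by blast
qed

lemma hdist_extension_unique:
  assumes x: "x \<in> H3" and "y \<in> H3" "z \<in> H3" "z' \<in> H3" "y \<noteq> x"
    and "hdist x z = hdist x z'" "hdist y z = hdist y z'"
    and "hdist y z = hdist x y + hdist x z"
  shows "z = z'"
proof -
  have "shift_to_j x z = shift_to_j x z'"
  proof (rule hdist_extension_unique_pt_j[of "shift_to_j x y"])
    show "shift_to_j x y \<noteq> pt_j"
      using assms shift_to_j_inj[OF x, of y x] shift_to_j_self[OF x] by auto
  qed (use assms shift_to_j_H3 in \<open>simp_all add: hdist_shift_to_j flip: shift_to_j_self[OF x]\<close>)
  then show ?thesis
    using shift_to_j_inj[OF x] by blast
qed

text \<open>Equality in the triangle inequality puts \<open>c\<close> on the extension of \<open>[p, z]\<close> beyond \<open>z\<close>,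
  at the distance of \<open>q\<close>.\<close>

lemma eq_endpoint_if_near_midpoint:
  assumes H3: "p \<in> H3" "q \<in> H3" "c \<in> H3" and mid: "hmidpoint p q z"
    and far: "hdist p q \<le> hdist p c" and near: "hdist z c \<le> hdist p q / 2"
  shows "c = q"
proof -
  have z: "z \<in> H3" and pz: "hdist p z = hdist p q / 2" and zq: "hdist z q = hdist p q / 2"
    using mid unfolding hmidpoint_def by auto
  have "hdist p c \<le> hdist p z + hdist z c"
    using hdist_triangle[OF H3(1) z H3(3)] .
  then have zc: "hdist z c = hdist p q / 2" and pc: "hdist p c = hdist p q"
    using far near pz by linarith+
  show ?thesis
  proof (cases "p = z")
    case True
    then have "hdist p q = 0" using pz by simp
    then show ?thesis
      using zc zq True hdist_eq_0_iff H3 by (metis hdist_commute)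
  next
    case False
    show ?thesis
      by (rule hdist_extension_unique[OF z H3(1,3,2) False])
        (use zc zq pc pz in \<open>simp_all add: hdist_commute\<close>)
  qed
qed

section \<open>The vertical geodesic and the diagonal elements\<close>

definition vline :: "(complex \<times> real) set" where
  "vline = {p. fst p = 0 \<and> snd p > 0}"

definition vfoot :: "complex \<times> real \<Rightarrow> complex \<times> real" where
  "vfoot p = (0, sqrt ((cmod (fst p))\<^sup>2 + (snd p)\<^sup>2))"

text \<open>\<open>vslope p = sinh\<^sup>2 \<rho>(p, V)\<close> (see \<open>vdist_eq\<close>) is a monotone substitute for the distance
  from \<open>p\<close> to the vertical line \<open>V\<close>, with a polynomial formula.\<close>

definition vslope :: "complex \<times> real \<Rightarrow> real" where
  "vslope p = (cmod (fst p) / snd p)\<^sup>2"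

definition vdist :: "complex \<times> real \<Rightarrow> real" where
  "vdist p = hdist p (vfoot p)"

lemma vline_subset_H3: "vline \<subseteq> H3"
  unfolding vline_def H3_def by auto

lemma vfoot_in_vline: "p \<in> H3 \<Longrightarrow> vfoot p \<in> vline"
  unfolding vfoot_def vline_def H3_def by (simp add: add_nonneg_pos)

lemma vslope_nonneg: "vslope p \<ge> 0"
  unfolding vslope_def by simp

lemma hcosh_vline_excess:
  assumes "t > 0" "s > 0"
  shows "hcosh (w, t) (0, s) - sqrt ((cmod w)\<^sup>2 + t\<^sup>2) / t = (sqrt ((cmod w)\<^sup>2 + t\<^sup>2) - s)\<^sup>2 / (2 * t * s)"
proof -
  define R where "R = sqrt ((cmod w)\<^sup>2 + t\<^sup>2)"
  have "R\<^sup>2 = (cmod w)\<^sup>2 + t\<^sup>2" unfolding R_def by simp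
  then show ?thesis
    unfolding hcosh_def R_def[symmetric] using assms by (simp add: field_simps power2_eq_square)
qed

lemma hcosh_vfoot:
  assumes "p \<in> H3"
  shows "hcosh p (vfoot p) = sqrt (1 + vslope p)"
proof -
  obtain w t where p: "p = (w, t)" by fastforce
  have t: "t > 0" using assms p by (simp add: H3_def)
  define R where "R = sqrt ((cmod w)\<^sup>2 + t\<^sup>2)"
  have "R > 0" unfolding R_def using t by (simp add: add_nonneg_pos)
  have "hcosh p (vfoot p) = R / t"
    using hcosh_vline_excess[OF t \<open>R > 0\<close>, of w] unfolding p vfoot_def R_def by simp
  also have "\<dots> = sqrt (R\<^sup>2 / t\<^sup>2)"
    using \<open>R > 0\<close> t by (simp add: real_sqrt_divide)
  also have "R\<^sup>2 / t\<^sup>2 = 1 + vslope p"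
    unfolding R_def vslope_def p using t by (simp add: field_simps power2_eq_square)
  finally show ?thesis .
qed

lemma hcosh_vfoot_le:
  assumes "p \<in> H3" "v \<in> vline"
  shows "hcosh p (vfoot p) \<le> hcosh p v" and "hcosh p v \<le> hcosh p (vfoot p) \<Longrightarrow> v = vfoot p"
proof -
  obtain w t where p: "p = (w, t)" by fastforce
  obtain s where v: "v = (0, s)" and s: "s > 0" using assms(2) unfolding vline_def by (cases v) auto
  have t: "t > 0" using assms p by (simp add: H3_def)
  define R where "R = sqrt ((cmod w)\<^sup>2 + t\<^sup>2)"
  have "R > 0" unfolding R_def using t by (simp add: add_nonneg_pos)
  have foot: "hcosh p (vfoot p) = R / t"
    using hcosh_vline_excess[OF t \<open>R > 0\<close>, of w] unfolding p vfoot_def R_def by simp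
  have excess: "hcosh p v - R / t = (R - s)\<^sup>2 / (2 * t * s)"
    using hcosh_vline_excess[OF t s, of w] unfolding p v R_def by simp
  moreover have "(R - s)\<^sup>2 / (2 * t * s) \<ge> 0"
    using t s by simp
  ultimately show "hcosh p (vfoot p) \<le> hcosh p v"
    using foot by linarith
  show "v = vfoot p" if "hcosh p v \<le> hcosh p (vfoot p)"
  proof -
    have "(R - s)\<^sup>2 / (2 * t * s) \<le> 0" using foot excess that by simp
    then have "R = s" using mult_pos_pos[OF s t] by (simp add: divide_le_0_iff)
    then show ?thesis unfolding v vfoot_def p R_def by simp
  qed
qed

lemma vdist_eq: "p \<in> H3 \<Longrightarrow> vdist p = arcosh (sqrt (1 + vslope p))"
  unfolding vdist_def hdist_eq_arcosh_hcosh by (simp add: hcosh_vfoot)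

lemma vdist_less_iff: "p \<in> H3 \<Longrightarrow> q \<in> H3 \<Longrightarrow> vdist p < vdist q \<longleftrightarrow> vslope p < vslope q"
  using vslope_nonneg[of p] vslope_nonneg[of q] by (simp add: vdist_eq)

lemma vdist_le_hdist: "p \<in> H3 \<Longrightarrow> v \<in> vline \<Longrightarrow> vdist p \<le> hdist p v"
  unfolding vdist_def
  using hcosh_vfoot_le(1) hdist_le_iff_hcosh vfoot_in_vline vline_subset_H3 by blast

lemma eq_vfoot_if_hdist_le_vdist:
  assumes "p \<in> H3" "v \<in> vline" "hdist p v \<le> vdist p"
  shows "v = vfoot p"
proof (rule hcosh_vfoot_le(2)[OF assms(1,2)])
  show "hcosh p v \<le> hcosh p (vfoot p)"
    using assms hdist_le_iff_hcosh[of p v p "vfoot p"] vfoot_in_vline vline_subset_H3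
    unfolding vdist_def by blast
qed

definition diag2 :: "complex \<Rightarrow> complex^2^2" where
  "diag2 a = mat2 a 0 0 (1 / a)"

lemma det_diag2 [simp]: "a \<noteq> 0 \<Longrightarrow> det (diag2 a) = 1"
  by (simp add: diag2_def)

lemma mob_act_diag2:
  assumes "a \<noteq> 0"
  shows "mob_act (diag2 a) (w, t) = (a\<^sup>2 * w, (cmod a)\<^sup>2 * t)"
proof -
  have "complex_of_real ((cmod (1/a))\<^sup>2) = (1/a) * cnj (1/a)"
    by (rule complex_of_real_cmod_square)
  then have "a * w * cnj (1/a) / complex_of_real ((cmod (1/a))\<^sup>2) = a\<^sup>2 * w"
    using assms by (simp add: field_simps power2_eq_square)
  moreover have "t / (cmod (1/a))\<^sup>2 = (cmod a)\<^sup>2 * t"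
    using assms by (simp add: norm_divide field_simps)
  ultimately show ?thesis
    by (simp add: diag2_def mob_act_mat2)
qed

lemma hcosh_scaling:
  assumes "m > 0" "t > 0"
  shows "hcosh (w, t) (b * w, m * t) = (m\<^sup>2 + 1 + (cmod (b - 1))\<^sup>2 * vslope (w, t)) / (2 * m)"
proof -
  have "w - b * w = - ((b - 1) * w)"
    by (simp add: algebra_simps)
  then have "(cmod (w - b * w))\<^sup>2 = (cmod (b - 1))\<^sup>2 * (cmod w)\<^sup>2"
    by (simp add: norm_mult power_mult_distrib)
  then show ?thesis
    unfolding hcosh_def vslope_def fst_conv snd_conv
    using assms by (simp add: field_simps power2_eq_square)
qed

lemma hcosh_diag2:
  assumes "a \<noteq> 0" "t > 0"
  shows "hcosh (w, t) (mob_act (diag2 a) (w, t)) =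
    (((cmod a)\<^sup>2)\<^sup>2 + 1 + (cmod (a\<^sup>2 - 1))\<^sup>2 * vslope (w, t)) / (2 * (cmod a)\<^sup>2)"
  unfolding mob_act_diag2[OF assms(1)] using assms by (intro hcosh_scaling) simp_all

lemma square_neq_1_if_cmod_neq_1: "cmod a \<noteq> 1 \<Longrightarrow> a\<^sup>2 \<noteq> 1"
  by (auto simp: power2_eq_1_iff)

lemma disp_diag2_less:
  assumes "a \<noteq> 0" "cmod a \<noteq> 1" "p \<in> H3" "q \<in> H3" "vdist p < vdist q"
  shows "disp (diag2 a) p < disp (diag2 a) q"
proof -
  obtain w t where p: "p = (w, t)" by fastforce
  obtain y s where q: "q = (y, s)" by fastforce
  have "t > 0" "s > 0" using assms p q by (auto simp: H3_def)
  have "(cmod (a\<^sup>2 - 1))\<^sup>2 > 0"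
    using square_neq_1_if_cmod_neq_1[OF assms(2)] by simp
  moreover have "vslope p < vslope q"
    using vdist_less_iff assms by blast
  ultimately have "hcosh p (mob_act (diag2 a) p) < hcosh q (mob_act (diag2 a) q)"
    unfolding p q hcosh_diag2[OF assms(1) \<open>t > 0\<close>] hcosh_diag2[OF assms(1) \<open>s > 0\<close>]
    using assms(1) by (simp add: divide_strict_right_mono)
  moreover have "mob_act (diag2 a) p \<in> H3" "mob_act (diag2 a) q \<in> H3"
    using assms by (simp_all add: mob_act_H3)
  ultimately show ?thesis
    unfolding disp_def using hdist_less_iff_hcosh assms(3,4) by blast
qed

section \<open>Geodesic lines and axes\<close>

lemma geodesic_line_H3: "geodesic_line L \<Longrightarrow> L \<subseteq> H3"
  unfolding geodesic_line_def by auto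

lemma geodesic_line_mob_act:
  assumes "det A = 1" "geodesic_line L"
  shows "geodesic_line (mob_act A ` L)"
proof -
  obtain \<gamma> where "\<And>s. \<gamma> s \<in> H3" "\<And>s t. hdist (\<gamma> s) (\<gamma> t) = \<bar>s - t\<bar>" "L = range \<gamma>"
    using assms(2) unfolding geodesic_line_def by blast
  then show ?thesis
    unfolding geodesic_line_def using assms(1)
    by (intro exI[of _ "\<lambda>s. mob_act A (\<gamma> s)"]) (auto simp: mob_act_H3 hdist_mob_act)
qed

lemma geodesic_line_hdist_double:
  assumes "geodesic_line L" "x \<in> L" "y \<in> L" "z \<in> L"
    and "hdist y z = hdist x y" "x \<noteq> z"
  shows "hdist x z = 2 * hdist x y"
proof -
  obtain \<gamma> where dist: "\<And>s t. hdist (\<gamma> s) (\<gamma> t) = \<bar>s - t\<bar>" and L: "L = range \<gamma>"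
    using assms(1) unfolding geodesic_line_def by blast
  obtain r s u where "x = \<gamma> r" "y = \<gamma> s" "z = \<gamma> u"
    using assms(2-4) L by blast
  with assms(5,6) dist have "\<bar>s - u\<bar> = \<bar>r - s\<bar>" "r \<noteq> u" "hdist x z = \<bar>r - u\<bar>" "hdist x y = \<bar>r - s\<bar>"
    by auto
  then show ?thesis
    by linarith
qed

lemma hdist_vline: "s > 0 \<Longrightarrow> t > 0 \<Longrightarrow> hdist (0, s) (0, t) = \<bar>ln s - ln t\<bar>"
proof -
  assume "s > 0" "t > 0"
  then have "hcosh (0, s) (0, t) = cosh (ln s - ln t)"
    unfolding hcosh_def cosh_def by (simp add: exp_diff field_simps power2_eq_square)
  also have "\<dots> = cosh \<bar>ln s - ln t\<bar>"
    by (simp add: abs_if)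
  finally show ?thesis
    unfolding hdist_eq_arcosh_hcosh by (metis abs_ge_zero arcosh_cosh_real)
qed

lemma geodesic_line_vline: "geodesic_line vline"
  unfolding geodesic_line_def
proof (intro exI[of _ "\<lambda>s. (0, exp s)"] conjI allI)
  show "vline = range (\<lambda>s. (0::complex, exp s))"
  proof
    show "vline \<subseteq> range (\<lambda>s. (0::complex, exp s))"
    proof
      fix p assume "p \<in> vline"
      then have "p = (0, exp (ln (snd p)))" unfolding vline_def by (cases p) auto
      then show "p \<in> range (\<lambda>s. (0::complex, exp s))" by blast
    qed
  qed (auto simp: vline_def)
qed (simp_all add: H3_def hdist_vline)

lemma real_isometry_surj:
  fixes f :: "real \<Rightarrow> real"
  assumes "\<And>s t. \<bar>f s - f t\<bar> = \<bar>s - t\<bar>"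
  shows "\<exists>s. f s = y"
proof -
  define s where "s = y - f 0"
  have "f s = f 0 + s \<or> f s = f 0 - s" "f (-s) = f 0 + s \<or> f (-s) = f 0 - s"
    using assms[of s 0] assms[of "-s" 0] by (auto simp: abs_if split: if_splits)
  moreover have "\<bar>f s - f (-s)\<bar> = \<bar>2 * s\<bar>"
    using assms[of s "-s"] by simp
  ultimately have "f s = f 0 + s \<or> f (-s) = f 0 + s"
    by auto
  then show ?thesis
    unfolding s_def by auto
qed

lemma geodesic_line_subset_vline:
  assumes "geodesic_line L" "L \<subseteq> vline"
  shows "L = vline"
proof
  obtain \<gamma> where dist: "\<And>s t. hdist (\<gamma> s) (\<gamma> t) = \<bar>s - t\<bar>" and L: "L = range \<gamma>"
    using assms(1) unfolding geodesic_line_def by blast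
  define \<sigma> where "\<sigma> s = snd (\<gamma> s)" for s
  have \<gamma>: "\<gamma> s = (0, \<sigma> s)" "\<sigma> s > 0" for s
  proof -
    have "\<gamma> s \<in> vline" using assms(2) L by blast
    then show "\<gamma> s = (0, \<sigma> s)" "\<sigma> s > 0"
      unfolding vline_def \<sigma>_def by (cases "\<gamma> s", simp)+
  qed
  have "\<bar>ln (\<sigma> s) - ln (\<sigma> t)\<bar> = \<bar>s - t\<bar>" for s t
    using dist[of s t] hdist_vline[OF \<gamma>(2) \<gamma>(2)] by (simp add: \<gamma>(1))
  show "vline \<subseteq> L"
  proof
    fix v assume "v \<in> vline"
    then obtain \<tau> where v: "v = (0, \<tau>)" "\<tau> > 0"
      unfolding vline_def by (cases v) auto
    obtain s where "ln (\<sigma> s) = ln \<tau>"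
      using real_isometry_surj[of "\<lambda>s. ln (\<sigma> s)"] \<open>\<And>s t. \<bar>ln (\<sigma> s) - ln (\<sigma> t)\<bar> = \<bar>s - t\<bar>\<close>
      by blast
    then have "\<gamma> s = v"
      using \<gamma>[of s] v by simp
    then show "v \<in> L"
      using L by blast
  qed
qed (use assms in blast)

lemma cosh_double_diag2_identity:
  fixes m \<alpha> \<beta> x :: real
  assumes "\<alpha> + \<beta> = 2 * (m\<^sup>2 + 1)" "m > 0"
  shows "2 * ((m\<^sup>2 + 1 + \<alpha> * x) / (2 * m))\<^sup>2 - 1 - ((m\<^sup>2)\<^sup>2 + 1 + \<alpha> * \<beta> * x) / (2 * m\<^sup>2)
       = \<alpha>\<^sup>2 * (x + x\<^sup>2) / (2 * m\<^sup>2)"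
proof -
  have \<beta>: "\<beta> = 2 * (m\<^sup>2 + 1) - \<alpha>" using assms by simp
  have "2 * ((m\<^sup>2 + 1 + \<alpha> * x) / (2 * m))\<^sup>2 = (m\<^sup>2 + 1 + \<alpha> * x)\<^sup>2 / (2 * m\<^sup>2)"
    using assms(2) by (simp add: power_divide power2_eq_square)
  moreover have "m ^ 4 = m * (m * (m * m))" by (simp add: eval_nat_numeral)
  ultimately show ?thesis
    unfolding \<beta> using assms(2)
    by (simp add: diff_divide_distrib[symmetric] add_divide_distrib[symmetric] divide_simps)
      (simp add: power2_eq_square algebra_simps)
qed

lemma hcosh_diag2_twice_identity:
  assumes "a \<noteq> 0" "t > 0"
  shows "2 * (hcosh (w, t) (mob_act (diag2 a) (w, t)))\<^sup>2 - 1
      - hcosh (w, t) (mob_act (diag2 a) (mob_act (diag2 a) (w, t)))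
    = ((cmod (a\<^sup>2 - 1))\<^sup>2)\<^sup>2 * (vslope (w, t) + (vslope (w, t))\<^sup>2) / (2 * ((cmod a)\<^sup>2)\<^sup>2)"
proof -
  define m \<alpha> \<beta> where "m = (cmod a)\<^sup>2" and "\<alpha> = (cmod (a\<^sup>2 - 1))\<^sup>2" and "\<beta> = (cmod (a\<^sup>2 + 1))\<^sup>2"
  have "m > 0" using assms by (simp add: m_def)
  have "\<alpha> + \<beta> = 2 * ((cmod (a\<^sup>2))\<^sup>2 + 1)"
    unfolding \<alpha>_def \<beta>_def cmod_power2 by (simp add: power2_eq_square algebra_simps)
  then have sum: "\<alpha> + \<beta> = 2 * (m\<^sup>2 + 1)"
    by (simp add: m_def norm_power power_mult)
  have "(a\<^sup>2)\<^sup>2 - 1 = (a\<^sup>2 - 1) * (a\<^sup>2 + 1)"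
    by (simp add: algebra_simps power2_eq_square)
  then have prod: "(cmod ((a\<^sup>2)\<^sup>2 - 1))\<^sup>2 = \<alpha> * \<beta>"
    by (simp add: \<alpha>_def \<beta>_def norm_mult power_mult_distrib)
  have one_step: "mob_act (diag2 a) (w, t) = (a\<^sup>2 * w, m * t)"
    using assms by (simp add: m_def mob_act_diag2)
  have two_steps: "mob_act (diag2 a) (mob_act (diag2 a) (w, t)) = ((a\<^sup>2)\<^sup>2 * w, m\<^sup>2 * t)"
    using assms by (simp add: one_step mob_act_diag2 m_def power2_eq_square norm_mult)
  have "hcosh (w, t) (mob_act (diag2 a) (w, t)) = (m\<^sup>2 + 1 + \<alpha> * vslope (w, t)) / (2 * m)"
    using hcosh_scaling[OF \<open>m > 0\<close> assms(2), of w "a\<^sup>2"] by (simp add: one_step \<alpha>_def)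
  moreover have "hcosh (w, t) (mob_act (diag2 a) (mob_act (diag2 a) (w, t)))
      = ((m\<^sup>2)\<^sup>2 + 1 + \<alpha> * \<beta> * vslope (w, t)) / (2 * m\<^sup>2)"
    using hcosh_scaling[of "m\<^sup>2" t w "(a\<^sup>2)\<^sup>2"] \<open>m > 0\<close> assms(2)
    by (simp add: two_steps prod[simplified])
  ultimately show ?thesis
    using cosh_double_diag2_identity[OF sum \<open>m > 0\<close>] by (simp add: \<alpha>_def m_def)
qed

text \<open>By the identity above, \<open>cosh \<rho>(z, g\<^sup>2z) < cosh 2\<rho>(z, gz)\<close> for \<open>g = diag2 a\<close> unless \<open>z\<close>
  lies on the vertical line, so only points of that line are moved along a geodesic.\<close>

lemma in_vline_if_hdist_diag2_double:
  assumes a: "a \<noteq> 0" "cmod a \<noteq> 1" and z: "z \<in> H3"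
    and double: "hdist z (mob_act (diag2 a) (mob_act (diag2 a) z)) = 2 * hdist z (mob_act (diag2 a) z)"
  shows "z \<in> vline"
proof -
  obtain w t where zwt: "z = (w, t)" by fastforce
  have t: "t > 0" using z zwt by (simp add: H3_def)
  have H3: "mob_act (diag2 a) z \<in> H3" "mob_act (diag2 a) (mob_act (diag2 a) z) \<in> H3"
    using z a by (simp_all add: mob_act_H3)
  have "hcosh z (mob_act (diag2 a) (mob_act (diag2 a) z)) = cosh (2 * hdist z (mob_act (diag2 a) z))"
    using cosh_hdist[OF z H3(2)] double by simp
  also have "\<dots> = 2 * (cosh (hdist z (mob_act (diag2 a) z)))\<^sup>2 - 1"
    by (simp add: cosh_double cosh_square_eq)
  also have "cosh (hdist z (mob_act (diag2 a) z)) = hcosh z (mob_act (diag2 a) z)"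
    using cosh_hdist[OF z H3(1)] .
  finally have "((cmod (a\<^sup>2 - 1))\<^sup>2)\<^sup>2 * (vslope z + (vslope z)\<^sup>2) / (2 * ((cmod a)\<^sup>2)\<^sup>2) = 0"
    using hcosh_diag2_twice_identity[OF a(1) t, of w] by (simp add: zwt)
  then have "vslope z + (vslope z)\<^sup>2 = 0"
    using a square_neq_1_if_cmod_neq_1[OF a(2)] by simp
  then have "vslope z = 0"
    using vslope_nonneg[of z] add_nonneg_eq_0_iff zero_le_power2 by blast
  then show ?thesis
    using t by (simp add: vslope_def vline_def zwt)
qed

lemma invariant_geodesic_diag2_subset_vline:
  assumes a: "a \<noteq> 0" "cmod a \<noteq> 1"
    and L: "geodesic_line L" and inv: "mob_act (diag2 a) ` L = L"
  shows "L \<subseteq> vline"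
proof
  fix z assume "z \<in> L"
  define T where "T = mob_act (diag2 a)"
  have "T z \<in> L" "T (T z) \<in> L"
    using \<open>z \<in> L\<close> inv by (auto simp: T_def)
  have H3: "z \<in> H3" "T z \<in> H3"
    using \<open>z \<in> L\<close> \<open>T z \<in> L\<close> geodesic_line_H3[OF L] by auto
  have "snd (T (T z)) = ((cmod a)\<^sup>2)\<^sup>2 * snd z"
    using a by (cases z) (simp add: T_def mob_act_diag2)
  moreover have "((cmod a)\<^sup>2)\<^sup>2 \<noteq> 1"
    using power_eq_1_iff[of "cmod a" 4] a(2) by (auto simp flip: power_mult)
  moreover have "snd z > 0"
    using H3 by (simp add: H3_def)
  ultimately have "z \<noteq> T (T z)"
    by (metis mult_cancel_right2 order_less_irrefl)
  moreover have "hdist (T z) (T (T z)) = hdist z (T z)"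
    using hdist_mob_act H3 a by (simp add: T_def)
  ultimately have "hdist z (T (T z)) = 2 * hdist z (T z)"
    using geodesic_line_hdist_double[OF L \<open>z \<in> L\<close> \<open>T z \<in> L\<close> \<open>T (T z) \<in> L\<close>] by simp
  then show "z \<in> vline"
    using in_vline_if_hdist_diag2_double[OF a H3(1)] by (simp add: T_def)
qed

lemma diag2_image_vline:
  assumes "a \<noteq> 0"
  shows "mob_act (diag2 a) ` vline = vline"
proof
  have "(cmod a)\<^sup>2 > 0" using assms by simp
  then show "mob_act (diag2 a) ` vline \<subseteq> vline"
    by (auto simp: vline_def mob_act_diag2[OF assms])
  show "vline \<subseteq> mob_act (diag2 a) ` vline"
  proof
    fix v assume "v \<in> vline"
    then obtain \<tau> where v: "v = (0, \<tau>)" "\<tau> > 0"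
      unfolding vline_def by (cases v) auto
    have "mob_act (diag2 a) (0, \<tau> / (cmod a)\<^sup>2) = v"
      using \<open>(cmod a)\<^sup>2 > 0\<close> v by (simp add: mob_act_diag2[OF assms])
    moreover have "(0, \<tau> / (cmod a)\<^sup>2) \<in> vline"
      using \<open>(cmod a)\<^sup>2 > 0\<close> v by (simp add: vline_def)
    ultimately show "v \<in> mob_act (diag2 a) ` vline"
      by blast
  qed
qed

lemma axis_diag2:
  assumes "a \<noteq> 0" "cmod a \<noteq> 1"
  shows "\<exists>!L. geodesic_line L \<and> mob_act (diag2 a) ` L = L" and "axis (diag2 a) = vline"
proof -
  have vline: "geodesic_line vline \<and> mob_act (diag2 a) ` vline = vline"
    using geodesic_line_vline diag2_image_vline[OF assms(1)] by blast
  have unique: "L = vline" if "geodesic_line L \<and> mob_act (diag2 a) ` L = L" for L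
  proof (rule geodesic_line_subset_vline)
    show "L \<subseteq> vline"
      using that by (intro invariant_geodesic_diag2_subset_vline[OF assms]) auto
  qed (use that in auto)
  show "\<exists>!L. geodesic_line L \<and> mob_act (diag2 a) ` L = L"
    using vline unique by (rule ex1I)
  show "axis (diag2 a) = vline"
    unfolding axis_def using vline unique by (rule the_equality)
qed

section \<open>Conjugation, diagonalisation and fixed points\<close>

lemma mob_act_conj:
  assumes "det M = 1" "det X = 1" "p \<in> H3"
  shows "mob_act (M ** X ** matrix_inv M) p = mob_act M (mob_act X (mob_act (matrix_inv M) p))"
  using assms matrix_inv_det1(3)[OF assms(1)]
  by (simp add: mob_act_mult det_mul mob_act_H3)

lemma mob_act_conj_image_eq_iff:
  assumes M: "det M = 1" and X: "det X = 1" and S: "S \<subseteq> H3"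
  shows "mob_act (M ** X ** matrix_inv M) ` S = S \<longleftrightarrow>
    mob_act X ` mob_act (matrix_inv M) ` S = mob_act (matrix_inv M) ` S"
proof -
  define S' where "S' = mob_act (matrix_inv M) ` S"
  have "S' \<subseteq> H3"
    unfolding S'_def using mob_act_image_H3 matrix_inv_det1(3)[OF M] S by blast
  have "mob_act (M ** X ** matrix_inv M) ` S = mob_act M ` mob_act X ` S'"
    unfolding S'_def image_image using mob_act_conj[OF M X] S by (auto intro!: image_cong)
  moreover have "mob_act M ` mob_act X ` S' = S \<longleftrightarrow> mob_act X ` S' = S'"
    using mob_act_matrix_inv_image[OF M] mob_act_image_H3[OF X \<open>S' \<subseteq> H3\<close>] S
    unfolding S'_def by metis
  ultimately show ?thesis
    unfolding S'_def by simp
qed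

lemma axis_conj:
  assumes M: "det M = 1" and X: "det X = 1"
    and unique: "\<exists>!L. geodesic_line L \<and> mob_act X ` L = L"
  shows "\<exists>!L. geodesic_line L \<and> mob_act (M ** X ** matrix_inv M) ` L = L"
    and "axis (M ** X ** matrix_inv M) = mob_act M ` axis X"
proof -
  have Mi: "det (matrix_inv M) = 1" using matrix_inv_det1[OF M] by simp
  have A: "geodesic_line (axis X)" "mob_act X ` axis X = axis X"
    using theI'[OF unique] unfolding axis_def by auto
  have "axis X \<subseteq> H3" using geodesic_line_H3[OF A(1)] .
  have invariant: "geodesic_line (mob_act M ` axis X) \<and>
      mob_act (M ** X ** matrix_inv M) ` mob_act M ` axis X = mob_act M ` axis X"
    using geodesic_line_mob_act[OF M A(1)] mob_act_conj_image_eq_iff[OF M X]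
      mob_act_image_H3[OF M \<open>axis X \<subseteq> H3\<close>] mob_act_matrix_inv_image(1)[OF M \<open>axis X \<subseteq> H3\<close>] A(2)
    by simp
  have eq: "L = mob_act M ` axis X"
    if "geodesic_line L \<and> mob_act (M ** X ** matrix_inv M) ` L = L" for L
  proof -
    have "L \<subseteq> H3" using that geodesic_line_H3 by blast
    have "geodesic_line (mob_act (matrix_inv M) ` L)"
      using that geodesic_line_mob_act[OF Mi] by blast
    moreover have "mob_act X ` mob_act (matrix_inv M) ` L = mob_act (matrix_inv M) ` L"
      using that mob_act_conj_image_eq_iff[OF M X \<open>L \<subseteq> H3\<close>] by simp
    ultimately have "mob_act (matrix_inv M) ` L = axis X"
      using unique A by (metis (mono_tags, lifting))
    then show ?thesis
      using mob_act_matrix_inv_image(2)[OF M \<open>L \<subseteq> H3\<close>] by simp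
  qed
  show "\<exists>!L. geodesic_line L \<and> mob_act (M ** X ** matrix_inv M) ` L = L"
    using invariant eq by (rule ex1I)
  show "axis (M ** X ** matrix_inv M) = mob_act M ` axis X"
    unfolding axis_def[of "M ** X ** matrix_inv M"] using invariant eq by (rule the_equality)
qed

lemma axis_conj_diag2:
  assumes "a \<noteq> 0" "cmod a \<noteq> 1" "det M = 1"
  shows "axis (M ** diag2 a ** matrix_inv M) = mob_act M ` vline"
  using axis_conj(2)[OF assms(3) det_diag2[OF assms(1)] axis_diag2(1)[OF assms(1,2)]]
    axis_diag2(2)[OF assms(1,2)] by simp

lemma disp_conj:
  assumes M: "det M = 1" and X: "det X = 1" and z: "z \<in> H3"
  shows "disp (M ** X ** matrix_inv M) z = disp X (mob_act (matrix_inv M) z)"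
proof -
  define z' where "z' = mob_act (matrix_inv M) z"
  have "z' \<in> H3"
    unfolding z'_def using mob_act_H3 matrix_inv_det1(3)[OF M] z by blast
  have "disp (M ** X ** matrix_inv M) z = hdist (mob_act M z') (mob_act M (mob_act X z'))"
    unfolding disp_def z'_def mob_act_conj[OF M X z] mob_act_matrix_inv(2)[OF M z] ..
  also have "\<dots> = disp X z'"
    unfolding disp_def using hdist_mob_act[OF M \<open>z' \<in> H3\<close>] mob_act_H3[OF X \<open>z' \<in> H3\<close>] by simp
  finally show ?thesis
    unfolding z'_def .
qed

lemma matrix_mul_inv_cancel:
  fixes P X :: "complex^2^2"
  assumes "det P = 1"
  shows "X ** P ** matrix_inv P = X" "X ** matrix_inv P ** P = X"
  using matrix_inv_det1[OF assms] by (simp_all flip: matrix_mul_assoc)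

lemma conj_mult:
  fixes P A B :: "complex^2^2"
  assumes "det P = 1"
  shows "(P ** A ** matrix_inv P) ** (P ** B ** matrix_inv P) = P ** (A ** B) ** matrix_inv P"
  by (simp add: matrix_mul_assoc matrix_mul_inv_cancel[OF assms])

lemma conj_uminus: "P ** (- A) ** Q = - (P ** A ** Q)" for P A Q :: "complex^2^2"
  by (simp add: matrix_mul_uminus_left matrix_mul_uminus_right)

lemma conj_eq_iff:
  fixes P A B :: "complex^2^2"
  assumes "det P = 1"
  shows "P ** A ** matrix_inv P = P ** B ** matrix_inv P \<longleftrightarrow> A = B"
proof
  assume "P ** A ** matrix_inv P = P ** B ** matrix_inv P"
  then have "matrix_inv P ** (P ** A ** matrix_inv P) ** P = matrix_inv P ** (P ** B ** matrix_inv P) ** P"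
    by simp
  then show "A = B"
    using matrix_inv_det1[OF assms] by (simp add: matrix_mul_assoc matrix_mul_inv_cancel[OF assms])
qed simp

lemma matrix_inv_conj:
  fixes P A :: "complex^2^2"
  assumes "det P = 1" "det A = 1"
  shows "matrix_inv (P ** A ** matrix_inv P) = P ** matrix_inv A ** matrix_inv P"
  using matrix_inv_det1[OF assms(1)] matrix_inv_det1[OF assms(2)]
  by (intro matrix_inv_unique)
    (simp_all add: matrix_mul_assoc matrix_mul_inv_cancel[OF assms(1)] matrix_mul_inv_cancel[OF assms(2)])

lemma matrix_inv_mult:
  fixes A B :: "complex^2^2"
  assumes "det A = 1" "det B = 1"
  shows "matrix_inv (A ** B) = matrix_inv B ** matrix_inv A"
  using matrix_inv_det1[OF assms(1)] matrix_inv_det1[OF assms(2)]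
  by (intro matrix_inv_unique)
    (simp_all add: matrix_mul_assoc matrix_mul_inv_cancel[OF assms(1)] matrix_mul_inv_cancel[OF assms(2)])

lemma trace_conj:
  fixes P A :: "complex^2^2"
  assumes "det P = 1"
  shows "trace (P ** A ** matrix_inv P) = trace A"
proof -
  have "trace ((P ** A) ** matrix_inv P) = trace (matrix_inv P ** (P ** A))"
    by (rule trace_mul_sym)
  then show ?thesis
    using matrix_inv_det1[OF assms] by (simp add: matrix_mul_assoc)
qed

lemma loxodromic_conj:
  fixes P A :: "complex^2^2"
  assumes "det P = 1"
  shows "loxodromic (P ** A ** matrix_inv P) \<longleftrightarrow> loxodromic A"
  using matrix_inv_det1(3)[OF assms] assms
  by (simp add: loxodromic_def SL2_def trace_conj det_mul)

lemma psl_commute_conj: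
  fixes P A B :: "complex^2^2"
  assumes "det P = 1"
  shows "psl_commute (P ** A ** matrix_inv P) (P ** B ** matrix_inv P) \<longleftrightarrow> psl_commute A B"
  unfolding psl_commute_def conj_mult[OF assms] conj_uminus[symmetric] conj_eq_iff[OF assms] ..

lemma of_real_in_interval_image: "\<bar>x\<bar> \<le> 2 \<Longrightarrow> complex_of_real x \<in> complex_of_real ` {-2..2}"
  by (rule imageI) auto

lemma quadratic_root_exists: "\<exists>a::complex. a*a - \<tau>*a + 1 = 0"
proof -
  define a where "a = (\<tau> + csqrt (\<tau>\<^sup>2 - 4)) / 2"
  have "csqrt (\<tau>\<^sup>2 - 4) * csqrt (\<tau>\<^sup>2 - 4) = \<tau>*\<tau> - 4"
    by (simp flip: power2_eq_square)
  then have "a*a - \<tau>*a + 1 = 0"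
    unfolding a_def by (simp add: field_simps) algebra
  then show ?thesis by blast
qed

lemma root_of_loxodromic_trace:
  assumes root: "a*a - \<tau>*a + 1 = 0" and \<tau>: "\<tau> \<notin> complex_of_real ` {-2..2}"
  shows "a \<noteq> 0" "cmod a \<noteq> 1"
proof -
  show "a \<noteq> 0" using root by auto
  show "cmod a \<noteq> 1"
  proof
    assume "cmod a = 1"
    then have "a * cnj a = 1"
      using complex_norm_square[of a] by simp
    then have "\<tau> * a = a * (a + cnj a)"
      using root by (simp add: algebra_simps)
    then have "\<tau> = complex_of_real (2 * Re a)"
      using \<open>a \<noteq> 0\<close> by (simp add: complex_add_cnj)
    moreover have "\<bar>2 * Re a\<bar> \<le> 2"
      using abs_Re_le_cmod[of a] \<open>cmod a = 1\<close> by simp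
    ultimately show False
      using \<tau> of_real_in_interval_image by blast
  qed
qed

lemma diff_inverse_neq_0: "a \<noteq> 0 \<Longrightarrow> a\<^sup>2 \<noteq> 1 \<Longrightarrow> a - 1 / a \<noteq> (0::complex)"
  by (auto simp: field_simps power2_eq_square)

text \<open>The columns of \<open>P\<close> are eigenvectors for the eigenvalues \<open>a\<close> and \<open>1/a\<close>, scaled to
  make \<open>det P = 1\<close>; which formula works depends on which off-diagonal entry is nonzero.\<close>

lemma eigenbasis_mat2_upper:
  assumes det: "\<alpha>*\<delta> - \<beta>*\<gamma> = 1" and root: "a*a - (\<alpha> + \<delta>)*a + 1 = 0"
    and "a\<^sup>2 \<noteq> 1" and "\<beta> \<noteq> 0"
  shows "\<exists>P. det P = 1 \<and> mat2 \<alpha> \<beta> \<gamma> \<delta> ** P = P ** diag2 a"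
proof -
  define ai k where "ai = 1 / a" and "k = \<beta> * (ai - a)"
  have "a \<noteq> 0" using root by auto
  then have aai: "a * ai = 1" unfolding ai_def by simp
  have "k \<noteq> 0"
    unfolding k_def ai_def using \<open>\<beta> \<noteq> 0\<close> diff_inverse_neq_0[OF \<open>a \<noteq> 0\<close> \<open>a\<^sup>2 \<noteq> 1\<close>] by auto
  define ki where "ki = 1 / k"
  have kki: "k * ki = 1" unfolding ki_def using \<open>k \<noteq> 0\<close> by simp
  define P where "P = mat2 \<beta> (\<beta> * ki) (a - \<alpha>) ((ai - \<alpha>) * ki)"
  have "det P = 1"
    unfolding P_def using kki unfolding k_def by (simp add: algebra_simps)
  moreover have "mat2 \<alpha> \<beta> \<gamma> \<delta> ** P = P ** diag2 a"
    unfolding P_def diag2_def ai_def[symmetric] mat2_mult mat2_eq_iff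
    using root aai kki det unfolding k_def by algebra
  ultimately show ?thesis by blast
qed

lemma eigenbasis_mat2_lower:
  assumes det: "\<alpha>*\<delta> - \<beta>*\<gamma> = 1" and root: "a*a - (\<alpha> + \<delta>)*a + 1 = 0"
    and "a\<^sup>2 \<noteq> 1" and "\<gamma> \<noteq> 0"
  shows "\<exists>P. det P = 1 \<and> mat2 \<alpha> \<beta> \<gamma> \<delta> ** P = P ** diag2 a"
proof -
  define ai k where "ai = 1 / a" and "k = \<gamma> * (a - ai)"
  have "a \<noteq> 0" using root by auto
  then have aai: "a * ai = 1" unfolding ai_def by simp
  have "k \<noteq> 0"
    unfolding k_def ai_def using \<open>\<gamma> \<noteq> 0\<close> diff_inverse_neq_0[OF \<open>a \<noteq> 0\<close> \<open>a\<^sup>2 \<noteq> 1\<close>] by auto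
  define ki where "ki = 1 / k"
  have kki: "k * ki = 1" unfolding ki_def using \<open>k \<noteq> 0\<close> by simp
  define P where "P = mat2 (a - \<delta>) ((ai - \<delta>) * ki) \<gamma> (\<gamma> * ki)"
  have "det P = 1"
    unfolding P_def using kki unfolding k_def by (simp add: algebra_simps)
  moreover have "mat2 \<alpha> \<beta> \<gamma> \<delta> ** P = P ** diag2 a"
    unfolding P_def diag2_def ai_def[symmetric] mat2_mult mat2_eq_iff
    using root aai kki det unfolding k_def by algebra
  ultimately show ?thesis by blast
qed

lemma loxodromic_diagonalizable:
  assumes "loxodromic g"
  obtains P a where "det P = 1" "a \<noteq> 0" "cmod a \<noteq> 1" "g = P ** diag2 a ** matrix_inv P"
proof -
  obtain \<alpha> \<beta> \<gamma> \<delta> where g: "g = mat2 \<alpha> \<beta> \<gamma> \<delta>" by (rule mat2_cases)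
  have det: "\<alpha>*\<delta> - \<beta>*\<gamma> = 1" and \<tau>: "\<alpha> + \<delta> \<notin> complex_of_real ` {-2..2}"
    using assms by (simp_all add: g loxodromic_def SL2_def)
  have "\<exists>P a. det P = 1 \<and> a \<noteq> 0 \<and> cmod a \<noteq> 1 \<and> g ** P = P ** diag2 a"
  proof (cases "\<beta> = 0 \<and> \<gamma> = 0")
    case True
    have root: "\<alpha>*\<alpha> - (\<alpha> + \<delta>)*\<alpha> + 1 = 0" using det True by (simp add: algebra_simps)
    note a = root_of_loxodromic_trace[OF root \<tau>]
    have "\<delta> = 1 / \<alpha>" using det True a(1) by (simp add: field_simps)
    then have "g ** mat 1 = mat 1 ** diag2 \<alpha>"
      using True by (simp add: g diag2_def mat_1_eq_mat2)
    then show ?thesis using a by (metis det_I)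
  next
    case False
    obtain a where root: "a*a - (\<alpha> + \<delta>)*a + 1 = 0" using quadratic_root_exists by blast
    note a = root_of_loxodromic_trace[OF root \<tau>]
    then show ?thesis
      using eigenbasis_mat2_upper[OF det root] eigenbasis_mat2_lower[OF det root]
        square_neq_1_if_cmod_neq_1[OF a(2)] False g by blast
  qed
  then obtain P a where "det P = 1" "a \<noteq> 0" "cmod a \<noteq> 1" "g ** P = P ** diag2 a"
    by blast
  moreover from this have "g = P ** diag2 a ** matrix_inv P"
    by (metis matrix_mul_inv_cancel(1))
  ultimately show ?thesis using that by blast
qed

text \<open>An element fixing \<open>j\<close> lies in \<open>SU(2)\<close>, so its trace is \<open>2 Re \<delta>\<close> with \<open>|\<delta>| \<le> 1\<close>.\<close>

lemma trace_in_interval_if_fixes_pt_j: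
  assumes det: "\<alpha>*\<delta> - \<beta>*\<gamma> = 1" and fixed: "mob_act (mat2 \<alpha> \<beta> \<gamma> \<delta>) pt_j = pt_j"
  shows "\<alpha> + \<delta> \<in> complex_of_real ` {-2..2}"
proof -
  define D where "D = (cmod \<delta>)\<^sup>2 + (cmod \<gamma>)\<^sup>2"
  have "D > 0" unfolding D_def using mob_denom_pos[OF det, of 1 0] by simp
  have image: "mob_act (mat2 \<alpha> \<beta> \<gamma> \<delta>) pt_j = ((\<beta> * cnj \<delta> + \<alpha> * cnj \<gamma>) / complex_of_real D, 1 / D)"
    unfolding pt_j_def mob_act_mat2 D_def by simp
  have "D = 1" using fixed image \<open>D > 0\<close> unfolding pt_j_def by simp
  have "\<beta> * cnj \<delta> + \<alpha> * cnj \<gamma> = 0" using fixed image \<open>D = 1\<close> unfolding pt_j_def by simp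
  moreover have "\<delta> * cnj \<delta> + \<gamma> * cnj \<gamma> = 1"
    using \<open>D = 1\<close> complex_norm_square[of \<delta>] complex_norm_square[of \<gamma>] unfolding D_def
    by (metis of_real_1 of_real_add)
  ultimately have "\<alpha> = cnj \<delta>" using det by algebra
  then have trace: "\<alpha> + \<delta> = complex_of_real (2 * Re \<delta>)"
    by (simp add: complex_eq_iff)
  have "(cmod \<delta>)\<^sup>2 \<le> 1"
    using \<open>D = 1\<close> unfolding D_def by (smt (verit) zero_le_power2)
  then have "\<bar>Re \<delta>\<bar> \<le> 1"
    using abs_Re_le_cmod[of \<delta>] by (simp add: power_le_one_iff)
  then show ?thesis
    unfolding trace by (intro of_real_in_interval_image) simp
qed

lemma trace_in_interval_if_fixed_point:
  assumes M: "det M = 1" and p: "p \<in> H3" and fixed: "mob_act M p = p"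
  shows "trace M \<in> complex_of_real ` {-2..2}"
proof -
  obtain w t where pwt: "p = (w, t)" by fastforce
  have "t > 0" using p pwt by (simp add: H3_def)
  define r where "r = complex_of_real (sqrt t)"
  have "r \<noteq> 0" unfolding r_def using \<open>t > 0\<close> by simp
  have "r * cnj r = complex_of_real t"
    unfolding r_def using \<open>t > 0\<close> by (simp flip: of_real_mult)
  define S where "S = mat2 r (w / r) 0 (1 / r)"
  have S: "det S = 1" unfolding S_def using \<open>r \<noteq> 0\<close> by simp
  have "(cmod (1 / r))\<^sup>2 = 1 / t"
    unfolding r_def using \<open>t > 0\<close> by (simp add: norm_divide power_divide)
  moreover have "w / r * cnj (1 / r) / complex_of_real (1 / t) = w"
    using \<open>r * cnj r = complex_of_real t\<close> \<open>r \<noteq> 0\<close> \<open>t > 0\<close> by (simp add: field_simps)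
  ultimately have "mob_act S pt_j = p"
    unfolding S_def pt_j_def mob_act_mat2 pwt using \<open>t > 0\<close> by simp
  define M' where "M' = matrix_inv S ** M ** S"
  have M'_conj: "M' = matrix_inv S ** M ** matrix_inv (matrix_inv S)"
    unfolding M'_def using matrix_inv_det1(4)[OF S] by simp
  have Si: "det (matrix_inv S) = 1" using matrix_inv_det1(3)[OF S] .
  have "det M' = 1" unfolding M'_def using Si M S by (simp add: det_mul)
  have "mob_act M' pt_j = pt_j"
    using mob_act_conj[OF Si M pt_j_H3] \<open>mob_act S pt_j = p\<close> fixed mob_act_matrix_inv[OF S pt_j_H3]
    unfolding M'_conj matrix_inv_det1(4)[OF S] by simp
  moreover obtain \<alpha> \<beta> \<gamma> \<delta> where "M' = mat2 \<alpha> \<beta> \<gamma> \<delta>" by (rule mat2_cases)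
  ultimately have "trace M' \<in> complex_of_real ` {-2..2}"
    using trace_in_interval_if_fixes_pt_j \<open>det M' = 1\<close> by simp
  then show ?thesis
    unfolding M'_conj trace_conj[OF Si] .
qed

lemma trace_mult_self: "det (A::complex^2^2) = 1 \<Longrightarrow> trace (A ** A) = (trace A)\<^sup>2 - 2"
  by (cases A rule: mat2_cases) (simp add: power2_eq_square algebra_simps)

lemma in_interval_if_square_minus_2_in_interval:
  assumes "z\<^sup>2 - 2 \<in> complex_of_real ` {-2..2}"
  shows "z \<in> complex_of_real ` {-2..2}"
proof -
  obtain r where r: "z\<^sup>2 = complex_of_real (r + 2)" "-2 \<le> r" "r \<le> 2"
    using assms by (auto simp: algebra_simps)
  then have "Im (z\<^sup>2) = 0" "Re (z\<^sup>2) = r + 2"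
    by simp_all
  then have product: "2 * Re z * Im z = 0" and difference: "(Re z)\<^sup>2 - (Im z)\<^sup>2 = r + 2"
    by (auto simp: power2_eq_square)
  have "Im z = 0"
  proof (cases "Re z = 0")
    case True
    then have "- (Im z)\<^sup>2 = r + 2" using difference by simp
    then have "(Im z)\<^sup>2 \<le> 0" using r(2) by linarith
    then show ?thesis by simp
  qed (use product in simp)
  then have "\<bar>Re z\<bar> \<le> 2"
    using abs_le_square_iff[of "Re z" 2] difference r(3) by simp
  moreover have "z = complex_of_real (Re z)"
    using \<open>Im z = 0\<close> by (simp add: complex_eq_iff)
  ultimately show ?thesis
    using of_real_in_interval_image[of "Re z"] by simp
qed

lemma loxodromic_no_period_2_point:
  assumes "loxodromic h" "p \<in> H3"
  shows "mob_act h (mob_act h p) \<noteq> p"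
proof
  assume "mob_act h (mob_act h p) = p"
  have "det h = 1" using assms(1) by (simp add: loxodromic_def SL2_def)
  then have "mob_act (h ** h) p = p"
    using mob_act_mult assms(2) \<open>mob_act h (mob_act h p) = p\<close> by simp
  then have "(trace h)\<^sup>2 - 2 \<in> complex_of_real ` {-2..2}"
    using trace_in_interval_if_fixed_point \<open>det h = 1\<close> assms(2) trace_mult_self by (metis det_mul mult_1)
  then show False
    using in_interval_if_square_minus_2_in_interval assms(1) by (simp add: loxodromic_def)
qed

section \<open>Common perpendiculars of the vertical line and its images\<close>

definition shortest_segment ::
    "(complex \<times> real) set \<Rightarrow> (complex \<times> real) set \<Rightarrow> complex \<times> real \<Rightarrow> complex \<times> real \<Rightarrow> bool" where
  "shortest_segment A B p q \<longleftrightarrow> p \<in> A \<and> q \<in> B \<and> (\<forall>p'\<in>A. \<forall>q'\<in>B. hdist p q \<le> hdist p' q')"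

lemma fst_mob_act_vline_eq_0_iff:
  assumes "\<alpha>*\<delta> - \<beta>*\<gamma> = 1" "\<tau> > 0"
  shows "fst (mob_act (mat2 \<alpha> \<beta> \<gamma> \<delta>) (0, \<tau>)) = 0 \<longleftrightarrow>
    \<beta> * cnj \<delta> + \<alpha> * cnj \<gamma> * complex_of_real (\<tau>\<^sup>2) = 0"
proof -
  define D where "D = (cmod (\<gamma> * 0 + \<delta>))\<^sup>2 + (cmod \<gamma>)\<^sup>2 * \<tau>\<^sup>2"
  have "D > 0"
    using mob_denom_pos[OF assms, of 0] unfolding D_def by simp
  then have "complex_of_real D \<noteq> 0"
    by simp
  moreover have "fst (mob_act (mat2 \<alpha> \<beta> \<gamma> \<delta>) (0, \<tau>)) =
      (\<beta> * cnj \<delta> + \<alpha> * cnj \<gamma> * complex_of_real (\<tau>\<^sup>2)) / complex_of_real D"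
    unfolding mob_act_mat2 D_def by simp
  ultimately show ?thesis by simp
qed

lemma mob_act_image_vline_subset_iff:
  assumes det: "\<alpha>*\<delta> - \<beta>*\<gamma> = 1"
  shows "mob_act (mat2 \<alpha> \<beta> \<gamma> \<delta>) ` vline \<subseteq> vline \<longleftrightarrow> \<beta> * cnj \<delta> = 0 \<and> \<alpha> * cnj \<gamma> = 0"
proof
  assume sub: "mob_act (mat2 \<alpha> \<beta> \<gamma> \<delta>) ` vline \<subseteq> vline"
  have "\<beta> * cnj \<delta> + \<alpha> * cnj \<gamma> * complex_of_real (\<tau>\<^sup>2) = 0" if "\<tau> > 0" for \<tau>
  proof -
    have "(0, \<tau>) \<in> vline"
      using that by (simp add: vline_def)
    then have "mob_act (mat2 \<alpha> \<beta> \<gamma> \<delta>) (0, \<tau>) \<in> vline"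
      using sub by blast
    then show ?thesis
      using fst_mob_act_vline_eq_0_iff[OF det that] by (simp add: vline_def)
  qed
  from this[of 1] this[of 2] have "\<beta> * cnj \<delta> + \<alpha> * cnj \<gamma> = 0" "\<beta> * cnj \<delta> + \<alpha> * cnj \<gamma> * 4 = 0"
    by simp_all
  moreover from this have "\<alpha> * cnj \<gamma> = 0"
    by algebra
  ultimately show "\<beta> * cnj \<delta> = 0 \<and> \<alpha> * cnj \<gamma> = 0"
    by simp
next
  assume "\<beta> * cnj \<delta> = 0 \<and> \<alpha> * cnj \<gamma> = 0"
  then show "mob_act (mat2 \<alpha> \<beta> \<gamma> \<delta>) ` vline \<subseteq> vline"
    using fst_mob_act_vline_eq_0_iff[OF det] mob_act_image_H3[of "mat2 \<alpha> \<beta> \<gamma> \<delta>" vline] det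
      vline_subset_H3
    by (fastforce simp: vline_def H3_def)
qed

text \<open>A loxodromic \<open>h\<close> preserving the axis of \<open>diag2 a\<close> is diagonal (it commutes with
  \<open>diag2 a\<close>) or anti-diagonal (it has trace \<open>0\<close>).\<close>

lemma loxodromic_not_preserves_vline:
  assumes lox: "loxodromic h" and "a \<noteq> 0" and nc: "\<not> psl_commute (diag2 a) h"
  shows "\<not> mob_act h ` vline \<subseteq> vline"
proof
  assume "mob_act h ` vline \<subseteq> vline"
  obtain \<alpha> \<beta> \<gamma> \<delta> where h: "h = mat2 \<alpha> \<beta> \<gamma> \<delta>" by (rule mat2_cases)
  have det: "\<alpha>*\<delta> - \<beta>*\<gamma> = 1" using lox h by (simp add: loxodromic_def SL2_def)
  have coeffs: "\<beta> * cnj \<delta> = 0" "\<alpha> * cnj \<gamma> = 0"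
    using \<open>mob_act h ` vline \<subseteq> vline\<close> mob_act_image_vline_subset_iff[OF det] h by simp_all
  show False
  proof (cases "\<beta> = 0")
    case True
    then have "\<gamma> = 0" using det coeffs by auto
    then have "diag2 a ** h = h ** diag2 a"
      using h True by (simp add: diag2_def mult.commute)
    then show False using nc unfolding psl_commute_def by simp
  next
    case False
    then have "\<delta> = 0" "\<alpha> = 0" using det coeffs by auto
    then have "trace h \<in> complex_of_real ` {-2..2}"
      using h of_real_in_interval_image[of 0] by simp
    then show False using lox by (simp add: loxodromic_def)
  qed
qed

lemma shortest_segment_vline_foot:
  assumes M: "det M = 1" and seg: "shortest_segment vline (mob_act M ` vline) v c"
  shows "v = vfoot c" and "\<And>c'. c' \<in> mob_act M ` vline \<Longrightarrow> vslope c \<le> vslope c'"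
proof -
  have image_H3: "mob_act M ` vline \<subseteq> H3"
    using mob_act_image_H3[OF M vline_subset_H3] .
  have v: "v \<in> vline" and c: "c \<in> H3" and min: "\<And>v' c'. v' \<in> vline \<Longrightarrow> c' \<in> mob_act M ` vline \<Longrightarrow> hdist v c \<le> hdist v' c'"
    using seg image_H3 unfolding shortest_segment_def by auto
  have "hdist c v \<le> vdist c"
    using min[OF vfoot_in_vline[OF c]] seg unfolding shortest_segment_def vdist_def
    by (simp add: hdist_commute)
  then show "v = vfoot c"
    using eq_vfoot_if_hdist_le_vdist[OF c v] by simp
  fix c' assume c': "c' \<in> mob_act M ` vline"
  then have "c' \<in> H3" using image_H3 by blast
  have "vdist c \<le> hdist c v" using vdist_le_hdist[OF c v] .
  also have "\<dots> \<le> hdist (vfoot c') c'"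
    using min[OF vfoot_in_vline[OF \<open>c' \<in> H3\<close>] c'] by (simp add: hdist_commute)
  also have "\<dots> = vdist c'"
    unfolding vdist_def by (rule hdist_commute)
  finally show "vslope c \<le> vslope c'"
    using vdist_less_iff[OF \<open>c' \<in> H3\<close> c] by linarith
qed

lemma vslope_mob_act_vline:
  assumes "\<alpha>*\<delta> - \<beta>*\<gamma> = 1" "\<tau> > 0"
  shows "vslope (mob_act (mat2 \<alpha> \<beta> \<gamma> \<delta>) (0, \<tau>)) =
    (cmod (\<beta> * cnj \<delta>))\<^sup>2 / \<tau>\<^sup>2 + 2 * Re ((\<beta> * cnj \<delta>) * cnj (\<alpha> * cnj \<gamma>)) + (cmod (\<alpha> * cnj \<gamma>))\<^sup>2 * \<tau>\<^sup>2"
proof -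
  define D where "D = (cmod (\<gamma> * 0 + \<delta>))\<^sup>2 + (cmod \<gamma>)\<^sup>2 * \<tau>\<^sup>2"
  have "D > 0" unfolding D_def using mob_denom_pos[OF assms] .
  define N where "N = \<beta> * cnj \<delta> + \<alpha> * cnj \<gamma> * complex_of_real (\<tau>\<^sup>2)"
  have "mob_act (mat2 \<alpha> \<beta> \<gamma> \<delta>) (0, \<tau>) = (N / complex_of_real D, \<tau> / D)"
    unfolding mob_act_mat2 N_def D_def by simp
  then have "vslope (mob_act (mat2 \<alpha> \<beta> \<gamma> \<delta>) (0, \<tau>)) = (cmod N)\<^sup>2 / \<tau>\<^sup>2"
    unfolding vslope_def using \<open>D > 0\<close> assms(2) by (simp add: norm_divide power_divide)
  also have "(cmod N)\<^sup>2 = (cmod (\<beta> * cnj \<delta>))\<^sup>2 + 2 * \<tau>\<^sup>2 * Re ((\<beta> * cnj \<delta>) * cnj (\<alpha> * cnj \<gamma>))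
      + (\<tau>\<^sup>2)\<^sup>2 * (cmod (\<alpha> * cnj \<gamma>))\<^sup>2"
    unfolding N_def cmod_power2 by (simp add: power2_eq_square algebra_simps)
  finally show ?thesis
    using assms(2) by (simp add: field_simps power2_eq_square)
qed

text \<open>By AM-GM the minimum of \<open>p\<^sup>2/\<tau>\<^sup>2 + q\<^sup>2\<tau>\<^sup>2\<close> over \<open>\<tau> > 0\<close> is \<open>2pq\<close>, attained only at
  \<open>\<tau>\<^sup>2 = p/q\<close>; if exactly one of \<open>p, q\<close> vanishes there is no minimum.\<close>

lemma minimum_inverse_square_plus_square:
  fixes p q \<tau> :: real
  assumes "p \<ge> 0" "q \<ge> 0" "p \<noteq> 0 \<or> q \<noteq> 0" "\<tau> > 0"
    and min: "\<And>\<sigma>. \<sigma> > 0 \<Longrightarrow> p\<^sup>2 / \<tau>\<^sup>2 + q\<^sup>2 * \<tau>\<^sup>2 \<le> p\<^sup>2 / \<sigma>\<^sup>2 + q\<^sup>2 * \<sigma>\<^sup>2"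
  shows "\<tau>\<^sup>2 = p / q"
proof -
  have "p > 0"
  proof (rule ccontr)
    assume "\<not> p > 0"
    then have "p = 0" "q > 0" using assms by auto
    then show False
      using min[of "\<tau> / 2"] \<open>\<tau> > 0\<close> by (simp add: power_divide field_simps)
  qed
  have "q > 0"
  proof (rule ccontr)
    assume "\<not> q > 0"
    then have "q = 0" using assms by auto
    then show False
      using min[of "2 * \<tau>"] \<open>\<tau> > 0\<close> \<open>p > 0\<close> by (simp add: power_divide field_simps)
  qed
  define s where "s = sqrt (p / q)"
  have "s > 0" "s\<^sup>2 = p / q"
    unfolding s_def using \<open>p > 0\<close> \<open>q > 0\<close> by simp_all
  have "p\<^sup>2 / \<tau>\<^sup>2 + q\<^sup>2 * \<tau>\<^sup>2 - 2 * p * q = (p - q * \<tau>\<^sup>2)\<^sup>2 / \<tau>\<^sup>2"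
    using \<open>\<tau> > 0\<close> by (simp add: field_simps power2_eq_square)
  moreover have "p\<^sup>2 / s\<^sup>2 + q\<^sup>2 * s\<^sup>2 = 2 * p * q"
    unfolding \<open>s\<^sup>2 = p / q\<close> using \<open>p > 0\<close> \<open>q > 0\<close> by (simp add: field_simps power2_eq_square)
  ultimately have "(p - q * \<tau>\<^sup>2)\<^sup>2 / \<tau>\<^sup>2 \<le> 0"
    using min[OF \<open>s > 0\<close>] by simp
  then have "p = q * \<tau>\<^sup>2"
    using \<open>\<tau> > 0\<close> by (simp add: divide_le_0_iff)
  then show ?thesis
    using \<open>q > 0\<close> by (simp add: field_simps)
qed

lemma shortest_segment_vline_unique:
  assumes M: "det M = 1" and not_sub: "\<not> mob_act M ` vline \<subseteq> vline"
    and seg1: "shortest_segment vline (mob_act M ` vline) v1 c1"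
    and seg2: "shortest_segment vline (mob_act M ` vline) v2 c2"
  shows "v1 = v2 \<and> c1 = c2"
proof -
  obtain \<alpha> \<beta> \<gamma> \<delta> where M_eq: "M = mat2 \<alpha> \<beta> \<gamma> \<delta>" by (rule mat2_cases)
  have det: "\<alpha>*\<delta> - \<beta>*\<gamma> = 1" using M M_eq by simp
  define p q R where "p = cmod (\<beta> * cnj \<delta>)" and "q = cmod (\<alpha> * cnj \<gamma>)"
    and "R = Re ((\<beta> * cnj \<delta>) * cnj (\<alpha> * cnj \<gamma>))"
  have "p \<noteq> 0 \<or> q \<noteq> 0"
    using not_sub mob_act_image_vline_subset_iff[OF det] by (auto simp: M_eq p_def q_def)
  have slope: "vslope (mob_act M (0, \<tau>)) = p\<^sup>2 / \<tau>\<^sup>2 + 2 * R + q\<^sup>2 * \<tau>\<^sup>2" if "\<tau> > 0" for \<tau>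
    unfolding M_eq p_def q_def R_def using vslope_mob_act_vline[OF det that] .
  have "\<tau>\<^sup>2 = p / q" if seg: "shortest_segment vline (mob_act M ` vline) v (mob_act M (0, \<tau>))"
    and "\<tau> > 0" for v \<tau>
  proof (rule minimum_inverse_square_plus_square)
    fix \<sigma> :: real assume "\<sigma> > 0"
    then have "mob_act M (0, \<sigma>) \<in> mob_act M ` vline"
      by (simp add: vline_def)
    then show "p\<^sup>2 / \<tau>\<^sup>2 + q\<^sup>2 * \<tau>\<^sup>2 \<le> p\<^sup>2 / \<sigma>\<^sup>2 + q\<^sup>2 * \<sigma>\<^sup>2"
      using shortest_segment_vline_foot(2)[OF M seg] slope \<open>\<sigma> > 0\<close> \<open>\<tau> > 0\<close> by fastforce
  qed (use \<open>\<tau> > 0\<close> \<open>p \<noteq> 0 \<or> q \<noteq> 0\<close> in \<open>simp_all add: p_def q_def\<close>)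
  moreover obtain \<tau>1 \<tau>2 where "\<tau>1 > 0" "c1 = mob_act M (0, \<tau>1)" "\<tau>2 > 0" "c2 = mob_act M (0, \<tau>2)"
    using seg1 seg2 unfolding shortest_segment_def vline_def by auto
  ultimately have "\<tau>1\<^sup>2 = \<tau>2\<^sup>2"
    using seg1 seg2 by metis
  then have "c1 = c2"
    using \<open>\<tau>1 > 0\<close> \<open>\<tau>2 > 0\<close> \<open>c1 = mob_act M (0, \<tau>1)\<close> \<open>c2 = mob_act M (0, \<tau>2)\<close>
    by (simp add: power2_eq_iff_nonneg)
  moreover have "v1 = vfoot c1" "v2 = vfoot c2"
    using shortest_segment_vline_foot(1)[OF M] seg1 seg2 by blast+
  ultimately show ?thesis
    by simp
qed

lemma shortest_segment_mob_act:
  assumes M: "det M = 1" and "A \<subseteq> H3" "B \<subseteq> H3" and seg: "shortest_segment A B p q"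
  shows "shortest_segment (mob_act M ` A) (mob_act M ` B) (mob_act M p) (mob_act M q)"
proof -
  have "hdist (mob_act M p) (mob_act M q) \<le> hdist (mob_act M a) (mob_act M b)" if "a \<in> A" "b \<in> B" for a b
    using seg that assms(2,3) hdist_mob_act[OF M] unfolding shortest_segment_def by (metis subsetD)
  then show ?thesis
    using seg unfolding shortest_segment_def by auto
qed

lemma hmidpoint_mob_act:
  assumes M: "det M = 1" and "p \<in> H3" "q \<in> H3" "hmidpoint p q z"
  shows "hmidpoint (mob_act M p) (mob_act M q) (mob_act M z)"
  using assms by (simp add: hmidpoint_def hdist_mob_act mob_act_H3)

lemma shortest_segment_midpoint_pullback:
  assumes M: "det M = 1" and "A \<subseteq> H3" "B \<subseteq> H3"
    and seg: "shortest_segment (mob_act M ` A) (mob_act M ` B) p q" and mid: "hmidpoint p q z"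
  shows "shortest_segment A B (mob_act (matrix_inv M) p) (mob_act (matrix_inv M) q)"
    and "hmidpoint (mob_act (matrix_inv M) p) (mob_act (matrix_inv M) q) (mob_act (matrix_inv M) z)"
proof -
  have Mi: "det (matrix_inv M) = 1" using matrix_inv_det1(3)[OF M] .
  have "mob_act M ` A \<subseteq> H3" "mob_act M ` B \<subseteq> H3"
    using mob_act_image_H3[OF M] assms(2,3) by auto
  then show "shortest_segment A B (mob_act (matrix_inv M) p) (mob_act (matrix_inv M) q)"
    using shortest_segment_mob_act[OF Mi _ _ seg] mob_act_matrix_inv_image(1)[OF M] assms(2,3)
    by simp
  show "hmidpoint (mob_act (matrix_inv M) p) (mob_act (matrix_inv M) q) (mob_act (matrix_inv M) z)"
    using hmidpoint_mob_act[OF Mi _ _ mid] seg \<open>mob_act M ` A \<subseteq> H3\<close> \<open>mob_act M ` B \<subseteq> H3\<close>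
    unfolding shortest_segment_def by blast
qed

lemma shortest_segment_inv_image_le:
  assumes h: "det h = 1" and "A \<subseteq> H3" and seg: "shortest_segment A (mob_act (matrix_inv h) ` A) p q"
    and "a \<in> A" "c \<in> mob_act h ` A"
  shows "hdist p q \<le> hdist a c"
proof -
  obtain a' where "a' \<in> A" "c = mob_act h a'" using assms(5) by blast
  have "hdist p q \<le> hdist a' (mob_act (matrix_inv h) a)"
    using seg \<open>a' \<in> A\<close> \<open>a \<in> A\<close> unfolding shortest_segment_def by blast
  also have "\<dots> = hdist (mob_act h a') a"
    using hdist_mob_act[OF h] mob_act_matrix_inv(2)[OF h] matrix_inv_det1(3)[OF h] mob_act_H3
      \<open>A \<subseteq> H3\<close> \<open>a' \<in> A\<close> \<open>a \<in> A\<close> by (metis subsetD)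
  finally show ?thesis
    using \<open>c = mob_act h a'\<close> by (simp add: hdist_commute)
qed

lemma shortest_segment_swap:
  assumes h: "det h = 1" and A: "A \<subseteq> H3"
    and seg: "shortest_segment A (mob_act (matrix_inv h) ` A) p q" and "q \<in> mob_act h ` A"
  shows "shortest_segment A (mob_act h ` A) p q"
    and "shortest_segment A (mob_act h ` A) (mob_act h q) (mob_act h p)"
proof -
  have le: "hdist p q \<le> hdist a c" if "a \<in> A" "c \<in> mob_act h ` A" for a c
    using shortest_segment_inv_image_le[OF h A seg that] .
  have "p \<in> A" "q \<in> H3"
    using seg A mob_act_image_H3[OF matrix_inv_det1(3)[OF h] A]
    unfolding shortest_segment_def by auto
  then show "shortest_segment A (mob_act h ` A) p q"
    using le \<open>q \<in> mob_act h ` A\<close> unfolding shortest_segment_def by blast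
  have "mob_act h q \<in> A"
    using seg A mob_act_matrix_inv(2)[OF h] unfolding shortest_segment_def by force
  moreover have "hdist (mob_act h q) (mob_act h p) = hdist p q"
    using hdist_mob_act[OF h \<open>q \<in> H3\<close>, of p] \<open>p \<in> A\<close> A by (metis hdist_commute subsetD)
  ultimately show "shortest_segment A (mob_act h ` A) (mob_act h q) (mob_act h p)"
    using le \<open>p \<in> A\<close> unfolding shortest_segment_def by auto
qed

section \<open>Displacements at the midpoint of the common perpendicular\<close>

lemma disp_diag2_less_disp_conj:
  assumes a: "a \<noteq> 0" "cmod a \<noteq> 1" and lox: "loxodromic h" and nc: "\<not> psl_commute (diag2 a) h"
    and seg: "shortest_segment vline (mob_act (matrix_inv h) ` vline) p q" and mid: "hmidpoint p q z"
  shows "disp (diag2 a) z < disp (h ** diag2 a ** matrix_inv h) z"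
proof (rule ccontr)
  assume not_less: "\<not> ?thesis"
  have h: "det h = 1" using lox by (simp add: loxodromic_def SL2_def)
  have z: "z \<in> H3" using mid by (simp add: hmidpoint_def)
  have p: "p \<in> vline" "p \<in> H3" and q: "q \<in> H3"
    using seg vline_subset_H3 mob_act_image_H3[OF matrix_inv_det1(3)[OF h] vline_subset_H3]
    unfolding shortest_segment_def by auto
  define z1 where "z1 = mob_act (matrix_inv h) z"
  have z1: "z1 \<in> H3" "mob_act h z1 = z"
    unfolding z1_def using mob_act_H3 matrix_inv_det1(3)[OF h] z mob_act_matrix_inv(2)[OF h z] by auto
  have "disp (diag2 a) z1 \<le> disp (diag2 a) z"
    using not_less disp_conj[OF h det_diag2[OF a(1)] z] by (simp add: z1_def)
  then have "\<not> vdist z < vdist z1"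
    using disp_diag2_less[OF a z z1(1)] by linarith
  define c where "c = mob_act h (vfoot z1)"
  have c: "c \<in> mob_act h ` vline" "c \<in> H3"
    unfolding c_def using vfoot_in_vline[OF z1(1)] mob_act_H3[OF h] vline_subset_H3 by blast+
  have "hdist z c = vdist z1"
    unfolding c_def vdist_def z1(2)[symmetric]
    using hdist_mob_act[OF h z1(1)] vfoot_in_vline[OF z1(1)] vline_subset_H3 by blast
  moreover have "vdist z \<le> hdist p q / 2"
    using vdist_le_hdist[OF z p(1)] mid by (simp add: hmidpoint_def hdist_commute)
  ultimately have "c = q"
    using eq_endpoint_if_near_midpoint[OF p(2) q c(2) mid]
      shortest_segment_inv_image_le[OF h vline_subset_H3 seg p(1) c(1)] \<open>\<not> vdist z < vdist z1\<close>
    by linarith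
  then have "mob_act h q = p \<and> mob_act h p = q"
    using shortest_segment_vline_unique[OF h loxodromic_not_preserves_vline[OF lox a(1) nc]]
      shortest_segment_swap[OF h vline_subset_H3 seg] c(1) by metis
  then show False
    using loxodromic_no_period_2_point[OF lox p(2)] by simp
qed

lemma conj_diag2_pair:
  fixes P h0 :: "complex^2^2"
  assumes P: "det P = 1" and h0: "det h0 = 1" and a: "a \<noteq> 0" "cmod a \<noteq> 1"
  defines "g \<equiv> P ** diag2 a ** matrix_inv P" and "h \<equiv> P ** h0 ** matrix_inv P"
  shows "axis g = mob_act P ` vline"
    and "axis (matrix_inv h ** g ** h) = mob_act P ` mob_act (matrix_inv h0) ` vline"
    and "h ** g ** matrix_inv h = P ** (h0 ** diag2 a ** matrix_inv h0) ** matrix_inv P"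
proof -
  have "matrix_inv h ** g ** h = (P ** matrix_inv h0) ** diag2 a ** matrix_inv (P ** matrix_inv h0)"
    using matrix_inv_det1[OF h0] matrix_inv_det1[OF P]
    by (simp add: g_def h_def matrix_inv_conj[OF P h0] matrix_inv_mult[OF P] matrix_mul_assoc
        matrix_mul_inv_cancel[OF P])
  then show "axis (matrix_inv h ** g ** h) = mob_act P ` mob_act (matrix_inv h0) ` vline"
    using axis_conj_diag2[OF a] P matrix_inv_det1(3)[OF h0]
    by (simp add: det_mul mob_act_mult_image vline_subset_H3)
  show "axis g = mob_act P ` vline"
    unfolding g_def using axis_conj_diag2[OF a P] .
  show "h ** g ** matrix_inv h = P ** (h0 ** diag2 a ** matrix_inv h0) ** matrix_inv P"
    using matrix_inv_det1[OF h0] matrix_inv_det1[OF P]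
    by (simp add: g_def h_def matrix_inv_conj[OF P h0] matrix_mul_assoc matrix_mul_inv_cancel[OF P])
qed

theorem lemma6p2:
  fixes g h :: "complex^2^2" and p q z0 :: "complex \<times> real"
  assumes "g \<in> SL2" and "h \<in> SL2"
    and "loxodromic g" and "loxodromic h"
    and "\<not> psl_commute g h"
    and "p \<in> axis g" and "q \<in> axis (matrix_inv h ** g ** h)"
    and "\<forall>p'\<in>axis g. \<forall>q'\<in>axis (matrix_inv h ** g ** h). hdist p q \<le> hdist p' q'"
    and "hmidpoint p q z0"
  shows "disp g z0 < disp (h ** g ** matrix_inv h) z0"
proof -
  obtain P a where P: "det P = 1" and a: "a \<noteq> 0" "cmod a \<noteq> 1" and g: "g = P ** diag2 a ** matrix_inv P"
    using loxodromic_diagonalizable[OF assms(3)] .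
  define h0 where "h0 = matrix_inv P ** h ** P"
  have h: "h = P ** h0 ** matrix_inv P"
    unfolding h0_def using matrix_inv_det1[OF P] by (simp add: matrix_mul_assoc matrix_mul_inv_cancel[OF P])
  have h0: "loxodromic h0" "\<not> psl_commute (diag2 a) h0"
    using assms(4,5) unfolding g h by (simp_all add: loxodromic_conj[OF P] psl_commute_conj[OF P])
  then have "det h0 = 1" by (simp add: loxodromic_def SL2_def)
  note conj = conj_diag2_pair[OF P \<open>det h0 = 1\<close> a, folded g h]
  have "shortest_segment (mob_act P ` vline) (mob_act P ` mob_act (matrix_inv h0) ` vline) p q"
    using assms(6-8) unfolding shortest_segment_def conj(1,2) by blast
  then have "disp (diag2 a) (mob_act (matrix_inv P) z0) <
      disp (h0 ** diag2 a ** matrix_inv h0) (mob_act (matrix_inv P) z0)"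
    using shortest_segment_midpoint_pullback[OF P vline_subset_H3 _ _ assms(9)]
      disp_diag2_less_disp_conj[OF a h0]
      mob_act_image_H3[OF matrix_inv_det1(3)[OF \<open>det h0 = 1\<close>] vline_subset_H3] by blast
  moreover have "z0 \<in> H3" using assms(9) by (simp add: hmidpoint_def)
  ultimately show ?thesis
    unfolding conj(3) unfolding g using disp_conj[OF P] \<open>det h0 = 1\<close> a matrix_inv_det1(3)
    by (simp add: det_mul)
qed

end
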